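(* Let $s\ge 2$ and let $Z_1,\dots,Z_s$ be the processes of the autoregressive multi-fidelity model described in the context, with nested designs $D_s\subseteq D_{s-1}\subseteq\dots\subseteq D_1$ and known parameters $\beta=(\beta_1,\dots,\beta_s)$, $\beta_\rho=(\beta_{\rho_1},\dots,\beta_{\rho_{s-1}})$, $\sigma^2=(\sigma_1^2,\dots,\sigma_s^2)$. For $t=1,\dots,s$ and $x\in Q$, the conditional distribution of $Z_t(x)$ given $(\mathcal Z_1,\dots,\mathcal Z_t)=(z^1,\dots,z^t)$ is Gaussian, $$\big[Z_t(x)\,\big|\,\mathcal Z_1=z^1,\dots,\mathcal Z_t=z^t\big]\sim\mathcal N\big(\mu_{Z_t}(x),\,s^2_{Z_t}(x)\big),$$ where $\mu_{Z_t}$ and $s^2_{Z_t}$ are given recursively by $$\mu_{Z_1}(x)=f_1^T(x)\beta_1+r_1^T(x)R_1^{-1}(z^1-F_1\beta_1),\qquad s^2_{Z_1}(x)=\sigma_1^2\big(1-r_1^T(x)R_1^{-1}r_1(x)\big),$$ and, for $t=2,\dots,s$, $$\mu_{Z_t}(x)=\rho_{t-1}(x)\,\mu_{Z_{t-1}}(x)+f_t^T(x)\beta_t+r_t^T(x)R_t^{-1}\big(z^t-\rho_{t-1}(D_t)\odot z_{t-1}(D_t)-F_t\beta_t\big),$$ $$s^2_{Z_t}(x)=\rho_{t-1}^2(x)\,s^2_{Z_{t-1}}(x)+\sigma_t^2\big(1-r_t^T(x)R_t^{-1}r_t(x)\big).$$ In particular the co-kriging predictive mean and variance of the highest-fidelity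 level $Z_s$ given all observations are $\mu_{Z_s}(x)$ and $s^2_{Z_s}(x)$.
   Context: Let $Q$ be an input set. For $t=1,\dots,s$ let $f_t:Q\to\mathbb R^{p_t}$ be regression functions, $\beta_t\in\mathbb R^{p_t}$, $\sigma_t^2>0$, and $r_t:Q\times Q\to\mathbb R$ a correlation kernel (positive definite, $r_t(x,x)=1$). For $t=1,\dots,s-1$ let $g_t:Q\to\mathbb R^{q_t}$, $\beta_{\rho_t}\in\mathbb R^{q_t}$ and $\rho_t(x)=g_t^T(x)\beta_{\rho_t}$. The model: $Z_1$ is a Gaussian process with mean $f_1^T(x)\beta_1$ and covariance $\sigma_1^2 r_1(x,x')$; for $t=2,\dots,s$, $\delta_t$ is a Gaussian process with mean $f_t^T(x)\beta_t$ and covariance $\sigma_t^2 r_t(x,x')$; the processes $Z_1,\delta_2,\dots,\delta_s$ are mutually independent; and $Z_t(x)=\rho_{t-1}(x)Z_{t-1}(x)+\delta_t(x)$ for $t=2,\dots,s$. The designs $D_t\subset Q$ are finite sets with $D_s\subseteq\dots\subseteq D_1$. $\mathcal Z_t$ denotes the vector $(Z_t(x))_{x\in D_t}$ and $z^t$ its observed value. $R_t$ is the matrix $(r_t(x,x'))_{x,x'\in D_t}$ (assumed invertible), $r_t(x)$ is the vector $(r_t(x,x'))_{x'\in D_t}$, $F_t$ is the matrix whose rows are $f_t^T(x)$, $x\in D_t$. $\rho_{t-1}(D_t)$ is the vector $(\rho_{t-1}(x))_{x\in D_t}$, $z_{t-1}(D_t)$ is the vector of observed values of $Z_{t-1}$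 at the points of $D_t$ (a subvector of $z^{t-1}$, since $D_t\subseteq D_{t-1}$), and $\odot$ denotes the entrywise product. *)

theory Defs
  imports "HOL-Probability.Probability"
begin

definition gauss :: "real \<Rightarrow> real \<Rightarrow> real measure" where
  "gauss mu v = (if v = 0 then return borel mu else density lborel (normal_density mu (sqrt v)))"

definition gaussian_process ::
  "'a measure \<Rightarrow> ('a \<Rightarrow> 'q \<Rightarrow> real) \<Rightarrow> ('q \<Rightarrow> real) \<Rightarrow> ('q \<Rightarrow> 'q \<Rightarrow> real) \<Rightarrow> bool" where
  "gaussian_process M X m k \<longleftrightarrow>
     (\<forall>x. (\<lambda>\<omega>. X \<omega> x) \<in> borel_measurable M) \<and>
     (\<forall>D c. finite D \<longrightarrow>
        distr M borel (\<lambda>\<omega>. \<Sum>x\<in>D. c x * X \<omega> x)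
          = gauss (\<Sum>x\<in>D. c x * m x) (\<Sum>x\<in>D. \<Sum>y\<in>D. c x * c y * k x y))"

definition correlation_kernel :: "('q \<Rightarrow> 'q \<Rightarrow> real) \<Rightarrow> bool" where
  "correlation_kernel r \<longleftrightarrow> (\<forall>x y. r x y = r y x) \<and> (\<forall>x. r x x = 1) \<and>
     (\<forall>D c. finite D \<longrightarrow> 0 \<le> (\<Sum>x\<in>D. \<Sum>y\<in>D. c x * c y * r x y))"

definition invertible_on :: "'q set \<Rightarrow> ('q \<Rightarrow> 'q \<Rightarrow> real) \<Rightarrow> bool" where
  "invertible_on D R \<longleftrightarrow>
     (\<forall>a. (\<forall>x\<in>D. (\<Sum>y\<in>D. R x y * a y) = 0) \<longrightarrow> (\<forall>y\<in>D. a y = 0))"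

definition mat_solve :: "'q set \<Rightarrow> ('q \<Rightarrow> 'q \<Rightarrow> real) \<Rightarrow> ('q \<Rightarrow> real) \<Rightarrow> ('q \<Rightarrow> real)" where
  "mat_solve D R v = (THE a. (\<forall>y. y \<notin> D \<longrightarrow> a y = 0) \<and> (\<forall>x\<in>D. (\<Sum>y\<in>D. R x y * a y) = v x))"

definition krig :: "'q set \<Rightarrow> ('q \<Rightarrow> 'q \<Rightarrow> real) \<Rightarrow> ('q \<Rightarrow> real) \<Rightarrow> ('q \<Rightarrow> real) \<Rightarrow> real" where
  "krig D R u v = (\<Sum>y\<in>D. u y * mat_solve D R v y)"

text \<open>Arguments: mean functions m t x = f_t(x)^T beta_t,
  rho t x = g_t(x)^T beta_rho_t, correlation kernels r t, designs D t, level t, point x,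
  observed data z (z (u, y) is the observed value of Z_u at y in D_u).\<close>
fun cok_mean :: "(nat \<Rightarrow> 'q \<Rightarrow> real) \<Rightarrow> (nat \<Rightarrow> 'q \<Rightarrow> real) \<Rightarrow> (nat \<Rightarrow> 'q \<Rightarrow> 'q \<Rightarrow> real)
    \<Rightarrow> (nat \<Rightarrow> 'q set) \<Rightarrow> nat \<Rightarrow> 'q \<Rightarrow> (nat \<times> 'q \<Rightarrow> real) \<Rightarrow> real" where
  "cok_mean m rho r D 0 x z = 0"
| "cok_mean m rho r D (Suc 0) x z =
     m 1 x + krig (D 1) (r 1) (r 1 x) (\<lambda>y. z (1, y) - m 1 y)"
| "cok_mean m rho r D (Suc (Suc t)) x z =
     rho (Suc t) x * cok_mean m rho r D (Suc t) x z + m (Suc (Suc t)) x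
     + krig (D (Suc (Suc t))) (r (Suc (Suc t))) (r (Suc (Suc t)) x)
         (\<lambda>y. z (Suc (Suc t), y) - rho (Suc t) y * z (Suc t, y) - m (Suc (Suc t)) y)"

fun cok_var :: "(nat \<Rightarrow> real) \<Rightarrow> (nat \<Rightarrow> 'q \<Rightarrow> real) \<Rightarrow> (nat \<Rightarrow> 'q \<Rightarrow> 'q \<Rightarrow> real)
    \<Rightarrow> (nat \<Rightarrow> 'q set) \<Rightarrow> nat \<Rightarrow> 'q \<Rightarrow> real" where
  "cok_var sigma2 rho r D 0 x = 0"
| "cok_var sigma2 rho r D (Suc 0) x =
     sigma2 1 * (1 - krig (D 1) (r 1) (r 1 x) (r 1 x))"
| "cok_var sigma2 rho r D (Suc (Suc t)) x =
     (rho (Suc t) x)\<^sup>2 * cok_var sigma2 rho r D (Suc t) x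
     + sigma2 (Suc (Suc t)) * (1 - krig (D (Suc (Suc t))) (r (Suc (Suc t))) (r (Suc (Suc t)) x) (r (Suc (Suc t)) x))"

text \<open>The observation vector (Z_1 on D_1, ..., Z_t on D_t), encoded as a function on nat x Q
  (entries outside the observed index set are set to 0).\<close>
definition obs_data :: "(nat \<Rightarrow> 'a \<Rightarrow> 'q \<Rightarrow> real) \<Rightarrow> (nat \<Rightarrow> 'q set) \<Rightarrow> nat \<Rightarrow> 'a \<Rightarrow> (nat \<times> 'q \<Rightarrow> real)" where
  "obs_data Z D t \<omega> = (\<lambda>(u, y). if u \<in> {1..t} \<and> y \<in> D u then Z u \<omega> y else 0)"

text \<open>K is (a version of) the conditional distribution of X given Y = y (Y valued in N):
  P(X \<in> A, Y \<in> B) = \<integral>_B K y (A) dP_Y(y) for all Borel A and measurable B.\<close>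
definition has_cond_distr ::
  "'a measure \<Rightarrow> ('a \<Rightarrow> real) \<Rightarrow> 'b measure \<Rightarrow> ('a \<Rightarrow> 'b) \<Rightarrow> ('b \<Rightarrow> real measure) \<Rightarrow> bool" where
  "has_cond_distr M X N Y K \<longleftrightarrow>
     (\<forall>A\<in>sets borel. \<forall>B\<in>sets N.
        emeasure M {\<omega>\<in>space M. X \<omega> \<in> A \<and> Y \<omega> \<in> B}
          = (\<integral>\<^sup>+ y. indicator B y * emeasure (K y) A \<partial>(distr M N Y)))"

end

theory Submission
  imports Defs "Jordan_Normal_Form.Determinant"
begin

(*
  Put P_1 = Z_1 and P_u = delta_u (u >= 2): these innovation processes are independent Gaussian
  processes, and unrolling the recursion gives Z_t(x) = sum_{u<=t} pi_{u,t}(x) P_u(x) with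
  pi_{u,t} = rho_u ... rho_{t-1}.  Let w_u(x) = R_u^{-1} r_u(x) be the simple-kriging weights of
  level u and eta_u(x) = P_u(x) - m_u(x) - w_u(x)^T (P_u(D_u) - m_u(D_u)) the kriging residual of the
  innovation.  Thanks to the nestedness of the designs, the observed values of delta_t on D_t are
  computable from z^t and z^{t-1}, and an induction on t yields the error representation
      Z_t(x) - mu_{Z_t}(x) = sum_{u<=t} pi_{u,t}(x) eta_u(x).
  Every eta_u(x) is uncorrelated with P_u on D_u.  All quantities being linear statistics of the
  jointly Gaussian innovations, the error is a centred Gaussian with variance s^2_{Z_t}(x) that is
  independent of the observations, and Z_t(x) = error + mu_{Z_t}(x) has the claimed conditional law.
*)

section \<open>Gaussian laws on the real line\<close>

lemma space_gauss[simp]: "space (gauss mu v) = UNIV"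
  by (simp add: gauss_def)

lemma sets_gauss[simp, measurable_cong]: "sets (gauss mu v) = sets borel"
  by (simp add: gauss_def)

lemma real_distribution_gauss: "0 \<le> v \<Longrightarrow> real_distribution (gauss mu v)"
  unfolding gauss_def real_distribution_def real_distribution_axioms_def
  by (auto simp: prob_space_return prob_space_normal_density)

text \<open>Characteristic function of a non-degenerate normal law, by an affine change of variables
  from the standard normal law.\<close>
lemma char_normal_density:
  assumes "0 < \<sigma>"
  shows "char (density lborel (normal_density mu \<sigma>)) t = iexp (t * mu) * exp (- ((t*\<sigma>)^2) / 2)"
proof -
  interpret S: real_distribution std_normal_distribution by (rule real_dist_normal_dist)
  have d: "distributed std_normal_distribution lborel (\<lambda>x. x) std_normal_density"
    unfolding distributed_def by (simp add: distr_id2)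
  have "distributed std_normal_distribution lborel (\<lambda>x. mu + \<sigma> * x)
          (normal_density (mu + \<sigma> * 0) (\<bar>\<sigma>\<bar> * 1))"
    by (rule S.normal_density_affine[OF d]) (use assms in auto)
  then have affine: "density lborel (normal_density mu \<sigma>)
      = distr std_normal_distribution lborel (\<lambda>x. mu + \<sigma> * x)"
    using assms unfolding distributed_def by simp
  have "char (density lborel (normal_density mu \<sigma>)) t
      = (CLINT x|std_normal_distribution. iexp (t * (mu + \<sigma> * x)))"
    unfolding affine char_def by (subst integral_distr) auto
  also have "\<dots> = (CLINT x|std_normal_distribution. iexp (t * mu) * iexp ((t*\<sigma>) * x))"
    by (intro Bochner_Integration.integral_cong refl) (simp add: algebra_simps flip: exp_add)
  also have "\<dots> = iexp (t * mu) * char std_normal_distribution (t*\<sigma>)"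
    unfolding char_def by simp
  finally show ?thesis by (simp add: char_std_normal_distribution)
qed

lemma char_gauss:
  assumes "0 \<le> v"
  shows "char (gauss mu v) t = exp (\<i> * complex_of_real (t * mu) - complex_of_real (t^2 * v / 2))"
proof (cases "v = 0")
  case True
  then show ?thesis by (simp add: gauss_def char_def integral_return)
next
  case False
  then have "0 < sqrt v" using assms by simp
  then have "char (gauss mu v) t
      = exp (\<i> * complex_of_real (t * mu)) * exp (- complex_of_real (t^2 * v / 2))"
    using False assms
    by (simp add: gauss_def char_normal_density power_mult_distrib exp_of_real[symmetric])
  then show ?thesis by (simp add: exp_add[symmetric] algebra_simps)
qed

lemma gauss_eqI:
  assumes "real_distribution P" "0 \<le> v"
    and "\<And>t. char P t = exp (\<i> * complex_of_real (t * mu) - complex_of_real (t^2 * v / 2))"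
  shows "P = gauss mu v"
  using assms by (intro Levy_uniqueness) (auto simp: real_distribution_gauss char_gauss)

lemma char_as_integral:
  assumes "f \<in> borel_measurable M"
  shows "(CLINT x|M. iexp (f x)) = char (distr M borel f) 1"
  unfolding char_def using assms by (subst integral_distr) auto

lemma emeasure_gauss_shift:
  assumes v: "0 \<le> v" and A: "A \<in> sets borel"
  shows "emeasure (gauss 0 v) {w. w + a \<in> A} = emeasure (gauss a v) A"
proof -
  interpret G: real_distribution "gauss 0 v" by (rule real_distribution_gauss[OF v])
  have shift: "distr (gauss 0 v) borel (\<lambda>w. w + a) = gauss a v"
  proof (rule gauss_eqI[OF _ v])
    show "real_distribution (distr (gauss 0 v) borel (\<lambda>w. w + a))"
      unfolding real_distribution_def real_distribution_axioms_def
      by (auto intro!: G.prob_space_distr)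
    fix t
    have "char (distr (gauss 0 v) borel (\<lambda>w. w + a)) t = (CLINT w|gauss 0 v. iexp (t * (w + a)))"
      unfolding char_def by (subst integral_distr) auto
    also have "\<dots> = (CLINT w|gauss 0 v. iexp (t * a) * iexp (t * w))"
      by (intro Bochner_Integration.integral_cong refl) (simp add: algebra_simps flip: exp_add)
    also have "\<dots> = iexp (t * a) * char (gauss 0 v) t"
      unfolding char_def by simp
    finally show "char (distr (gauss 0 v) borel (\<lambda>w. w + a)) t
        = exp (\<i> * complex_of_real (t * a) - complex_of_real (t\<^sup>2 * v / 2))"
      using v by (simp add: char_gauss flip: exp_add)
  qed
  have "emeasure (gauss a v) A = emeasure (distr (gauss 0 v) borel (\<lambda>w. w + a)) A"
    by (simp add: shift)
  also have "\<dots> = emeasure (gauss 0 v) {w. w + a \<in> A}"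
    using A by (subst emeasure_distr) (auto simp: vimage_def)
  finally show ?thesis by simp
qed

lemma indep_gauss_sum:
  fixes G :: "'i \<Rightarrow> 'a \<Rightarrow> real"
  assumes P: "prob_space M" and S: "finite S"
    and ind: "prob_space.indep_vars M (\<lambda>_. borel) G S"
    and law: "\<And>u. u \<in> S \<Longrightarrow> distr M borel (G u) = gauss (mu u) (v u)"
    and v: "\<And>u. u \<in> S \<Longrightarrow> 0 \<le> v u"
  shows "distr M borel (\<lambda>\<omega>. a0 + (\<Sum>u\<in>S. G u \<omega>))
           = gauss (a0 + (\<Sum>u\<in>S. mu u)) (\<Sum>u\<in>S. v u)"
proof (rule gauss_eqI)
  interpret prob_space M by (rule P)
  have Gm[measurable]: "G u \<in> borel_measurable M" if "u \<in> S" for u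
    using ind that unfolding indep_vars_def by blast
  have sum_m: "(\<lambda>\<omega>. \<Sum>u\<in>S. G u \<omega>) \<in> borel_measurable M"
    using Gm by measurable
  then show "real_distribution (distr M borel (\<lambda>\<omega>. a0 + (\<Sum>u\<in>S. G u \<omega>)))"
    by simp
  show "0 \<le> (\<Sum>u\<in>S. v u)" by (rule sum_nonneg) (rule v)
  fix t
  have "char (distr M borel (\<lambda>\<omega>. a0 + (\<Sum>u\<in>S. G u \<omega>))) t
      = (CLINT \<omega>|M. iexp (t * a0) * iexp (t * (\<Sum>u\<in>S. G u \<omega>)))"
    unfolding char_def using sum_m
    by (subst integral_distr) (auto intro!: Bochner_Integration.integral_cong
        simp: algebra_simps simp flip: exp_add)
  also have "\<dots> = iexp (t * a0) * char (distr M borel (\<lambda>\<omega>. \<Sum>u\<in>S. G u \<omega>)) t"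
    unfolding char_def using sum_m by (subst integral_distr) auto
  also have "\<dots> = iexp (t * a0) * (\<Prod>u\<in>S. char (distr M borel (G u)) t)"
    using char_distr_sum[OF ind] by simp
  also have "\<dots> = iexp (t * a0) * (\<Prod>u\<in>S. exp (\<i> * complex_of_real (t * mu u)
                     - complex_of_real (t\<^sup>2 * v u / 2)))"
    using v by (intro arg_cong2[where f="(*)"] refl prod.cong) (auto simp: law char_gauss)
  also have "\<dots> = exp (\<i> * complex_of_real (t * a0) + (\<Sum>u\<in>S. \<i> * complex_of_real (t * mu u)
                     - complex_of_real (t\<^sup>2 * v u / 2)))"
    using S by (simp add: exp_sum exp_add)
  also have "(\<Sum>u\<in>S. \<i> * complex_of_real (t * mu u) - complex_of_real (t\<^sup>2 * v u / 2))
      = \<i> * complex_of_real (t * (\<Sum>u\<in>S. mu u)) - complex_of_real (t\<^sup>2 * (\<Sum>u\<in>S. v u) / 2)"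
    by (simp only: sum_subtractf sum_distrib_left sum_divide_distrib of_real_sum[symmetric])
      (simp add: sum_distrib_left of_real_sum)
  also have "\<i> * complex_of_real (t * a0) + (\<i> * complex_of_real (t * (\<Sum>u\<in>S. mu u))
      - complex_of_real (t\<^sup>2 * (\<Sum>u\<in>S. v u) / 2))
      = \<i> * complex_of_real (t * (a0 + (\<Sum>u\<in>S. mu u))) - complex_of_real (t\<^sup>2 * (\<Sum>u\<in>S. v u) / 2)"
    by (simp add: algebra_simps)
  finally show "char (distr M borel (\<lambda>\<omega>. a0 + (\<Sum>u\<in>S. G u \<omega>))) t
      = exp (\<i> * complex_of_real (t * (a0 + (\<Sum>u\<in>S. mu u)))
          - complex_of_real (t\<^sup>2 * (\<Sum>u\<in>S. v u) / 2))" .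
qed

section \<open>Measures determined by their characteristic functions\<close>

abbreviation borel_pi :: "'i set \<Rightarrow> ('i \<Rightarrow> real) measure" where
  "borel_pi I \<equiv> Pi\<^sub>M I (\<lambda>_. borel)"

definition char_vec :: "'i set \<Rightarrow> ('i \<Rightarrow> real) measure \<Rightarrow> ('i \<Rightarrow> real) \<Rightarrow> complex" where
  "char_vec I P t = (CLINT x|P. iexp (\<Sum>j\<in>I. t j * x j))"

lemma emeasure_density_const:
  assumes "A \<in> sets M"
  shows "emeasure (density M (\<lambda>_. ennreal c)) A = ennreal c * emeasure M A"
  using assms by (simp add: emeasure_density nn_integral_cmult_indicator)

lemma real_distribution_normalise:
  fixes M :: "real measure"
  assumes M: "finite_measure M" "sets M = sets borel" and c: "0 < c" "measure M UNIV = c"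
  shows "real_distribution (density M (\<lambda>_. ennreal (1/c)))"
proof -
  interpret finite_measure M by (rule M(1))
  have spM: "space M = UNIV" using sets_eq_imp_space_eq[OF M(2)] by simp
  have "emeasure (density M (\<lambda>_. ennreal (1/c))) (space M) = ennreal (1/c) * emeasure M UNIV"
    using spM sets.top[of M] by (simp add: emeasure_density_const)
  also have "\<dots> = 1" using c emeasure_eq_measure[of UNIV]
    by (simp add: ennreal_mult[symmetric])
  finally have "prob_space (density M (\<lambda>_. ennreal (1/c)))" by (intro prob_spaceI) simp
  then show ?thesis unfolding real_distribution_def real_distribution_axioms_def
    using M(2) by simp
qed

text \<open>Levy uniqueness extended from probability measures to arbitrary finite Borel measures on R:
  normalise both measures by their (common) total mass.\<close>
lemma finite_measure_eq_by_char:
  fixes \<mu> \<nu> :: "real measure"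
  assumes fm: "finite_measure \<mu>" "finite_measure \<nu>"
    and sets: "sets \<mu> = sets borel" "sets \<nu> = sets borel"
    and ch: "\<And>s. (CLINT x|\<mu>. iexp (s*x)) = (CLINT x|\<nu>. iexp (s*x))"
  shows "\<mu> = \<nu>"
proof -
  interpret A: finite_measure \<mu> by (rule fm)
  interpret B: finite_measure \<nu> by (rule fm)
  have sp: "space \<mu> = UNIV" "space \<nu> = UNIV"
    using sets_eq_imp_space_eq[OF sets(1)] sets_eq_imp_space_eq[OF sets(2)] by auto
  have "complex_of_real (measure \<mu> (space \<mu>)) = complex_of_real (measure \<nu> (space \<nu>))"
    using ch[of 0] by simp
  then have mass: "measure \<mu> UNIV = measure \<nu> UNIV" using sp by simp
  define c where "c = measure \<mu> UNIV"
  have c0: "c \<ge> 0" unfolding c_def by simp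
  show ?thesis
  proof (cases "c = 0")
    case True
    show ?thesis
    proof (rule measure_eqI)
      fix A assume A: "A \<in> sets \<mu>"
      have "emeasure \<mu> A \<le> emeasure \<mu> UNIV" using A sp sets.top[of \<mu>] by (intro emeasure_mono) auto
      also have "\<dots> = 0" using True A.emeasure_eq_measure[of UNIV] unfolding c_def by simp
      finally have 1: "emeasure \<mu> A = 0" by simp
      have "emeasure \<nu> A \<le> emeasure \<nu> UNIV"
        using A sp sets sets.top[of \<nu>] by (intro emeasure_mono) auto
      also have "\<dots> = 0" using True mass B.emeasure_eq_measure[of UNIV] unfolding c_def by simp
      finally show "emeasure \<mu> A = emeasure \<nu> A" using 1 by simp
    qed (use sets in simp)
  next
    case False
    then have cpos: "c > 0" using c0 by simp
    let ?d = "\<lambda>M. density M (\<lambda>_. ennreal (1/c))"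
    note rd = real_distribution_normalise[OF _ _ cpos]
    have normalised: "?d \<mu> = ?d \<nu>"
    proof (rule Levy_uniqueness)
      show "real_distribution (?d \<mu>)" using rd[OF fm(1) sets(1)] c_def by simp
      show "real_distribution (?d \<nu>)" using rd[OF fm(2) sets(2)] mass c_def by simp
      show "char (?d \<mu>) = char (?d \<nu>)"
      proof
        fix s
        show "char (?d \<mu>) s = char (?d \<nu>) s"
          unfolding char_def using ch[of s] cpos
          by (subst (1 2) integral_density)
            (auto simp: sets sp measurable_cong_sets[OF sets(1) refl]
              measurable_cong_sets[OF sets(2) refl])
      qed
    qed
    show ?thesis
    proof (rule measure_eqI)
      show "sets \<mu> = sets \<nu>" using sets by simp
      fix A assume A: "A \<in> sets \<mu>"
      have "emeasure \<mu> A = ennreal c * emeasure (?d \<mu>) A"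
        using A cpos
        by (simp add: emeasure_density_const mult.assoc[symmetric] ennreal_mult[symmetric])
      also have "\<dots> = ennreal c * emeasure (?d \<nu>) A" using normalised by simp
      also have "\<dots> = emeasure \<nu> A"
        using A cpos sets
        by (simp add: emeasure_density_const mult.assoc[symmetric] ennreal_mult[symmetric])
      finally show "emeasure \<mu> A = emeasure \<nu> A" .
    qed
  qed
qed

lemma integral_coordinate_density:
  fixes f :: "real \<Rightarrow> complex"
  assumes "sets M = sets (borel_pi K)" "i \<in> K" "g \<in> borel_measurable (borel_pi K)" "\<And>x. 0 \<le> g x"
    "f \<in> borel_measurable borel"
  shows "integral\<^sup>L (distr (density M g) borel (\<lambda>x. x i)) f = integral\<^sup>L M (\<lambda>x. g x *\<^sub>R f (x i))"
proof -
  have [measurable]: "g \<in> borel_measurable M" using assms(1,3) measurable_cong_sets by blast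
  have [measurable]: "(\<lambda>x. x i) \<in> measurable M borel"
    using assms(1,2) measurable_cong_sets[OF assms(1) refl]
    by (auto intro: measurable_component_singleton)
  show ?thesis using assms(4,5)
    by (subst integral_distr) (auto simp: integral_density)
qed

lemma finite_measure_coordinate_density:
  fixes C :: real
  assumes "finite_measure M" "sets M = sets (borel_pi K)" "i \<in> K"
    "g \<in> borel_measurable (borel_pi K)" "\<And>x. 0 \<le> g x" "\<And>x. g x \<le> C"
  shows "finite_measure (distr (density M g) borel (\<lambda>x. x i))"
proof
  interpret finite_measure M by fact
  have [measurable]: "g \<in> borel_measurable M" using assms(2,4) measurable_cong_sets by blast
  have [measurable]: "(\<lambda>x. x i) \<in> measurable M borel"
    using assms(2,3) measurable_cong_sets[OF assms(2) refl]
    by (auto intro: measurable_component_singleton)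
  have "emeasure (distr (density M g) borel (\<lambda>x. x i)) (space (distr (density M g) borel (\<lambda>x. x i)))
     = (\<integral>\<^sup>+ x. g x \<partial>M)"
    by (subst emeasure_distr) (auto simp: emeasure_density intro!: nn_integral_cong)
  also have "\<dots> \<le> (\<integral>\<^sup>+ x. ennreal C \<partial>M)"
    using assms(6) by (intro nn_integral_mono) (auto intro: ennreal_leI)
  also have "\<dots> < \<infinity>" by (simp add: ennreal_mult_eq_top_iff less_top[symmetric])
  finally show "emeasure (distr (density M g) borel (\<lambda>x. x i))
      (space (distr (density M g) borel (\<lambda>x. x i))) \<noteq> \<infinity>"
    by simp
qed

lemma weighted_coordinate_law_eq:
  fixes g :: "('i \<Rightarrow> real) \<Rightarrow> real"
  assumes P: "finite_measure P" "sets P = sets (borel_pi K)"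
    and Q: "finite_measure Q" "sets Q = sets (borel_pi K)"
    and i: "i \<in> K" and g: "g \<in> borel_measurable (borel_pi K)" "\<And>x. 0 \<le> g x" "\<And>x. g x \<le> C"
    and ch: "\<And>s. (CLINT x|P. g x *\<^sub>R iexp (s * x i)) = (CLINT x|Q. g x *\<^sub>R iexp (s * x i))"
    and B: "B \<in> sets borel"
  shows "(CLINT x|P. g x *\<^sub>R complex_of_real (indicator B (x i)))
       = (CLINT x|Q. g x *\<^sub>R complex_of_real (indicator B (x i)))"
proof -
  have laws: "distr (density P g) borel (\<lambda>x. x i) = distr (density Q g) borel (\<lambda>x. x i)"
  proof (rule finite_measure_eq_by_char)
    show "finite_measure (distr (density P g) borel (\<lambda>x. x i))"
      by (rule finite_measure_coordinate_density[OF P i g])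
    show "finite_measure (distr (density Q g) borel (\<lambda>x. x i))"
      by (rule finite_measure_coordinate_density[OF Q i g])
    fix s
    show "(CLINT x|distr (density P g) borel (\<lambda>x. x i). iexp (s*x))
        = (CLINT x|distr (density Q g) borel (\<lambda>x. x i). iexp (s*x))"
      using ch[of s]
      by (simp add: integral_coordinate_density[OF P(2) i g(1,2)]
          integral_coordinate_density[OF Q(2) i g(1,2)])
  qed auto
  have "(CLINT x|P. g x *\<^sub>R complex_of_real (indicator B (x i)))
      = (CLINT y|distr (density P g) borel (\<lambda>x. x i). complex_of_real (indicator B y))"
    using B by (subst integral_coordinate_density[OF P(2) i g(1,2)]) auto
  also have "\<dots> = (CLINT y|distr (density Q g) borel (\<lambda>x. x i). complex_of_real (indicator B y))"
    using laws by simp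
  also have "\<dots> = (CLINT x|Q. g x *\<^sub>R complex_of_real (indicator B (x i)))"
    using B by (subst integral_coordinate_density[OF Q(2) i g(1,2)]) auto
  finally show ?thesis .
qed

text \<open>Euler's formula and the product identities behind the 1 + cos / 1 + sin weighting.\<close>
lemma iexp_cos_sin: "iexp th = complex_of_real (cos th) + \<i> * complex_of_real (sin th)"
  by (simp add: cis_conv_exp[symmetric] complex_eq_iff)

lemma cos_iexp_id:
  "complex_of_real (1 + cos th) * iexp a = iexp a + (iexp (a + th) + iexp (a + - th)) / 2"
proof -
  have c: "complex_of_real (cos th) = (iexp th + iexp (- th)) / 2"
    by (simp add: cos_of_real[symmetric] cos_exp_eq)
  have e: "iexp (a + th) = iexp a * iexp th" "iexp (a + - th) = iexp a * iexp (- th)"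
    by (simp_all only: of_real_add of_real_minus distrib_left exp_add mult_minus_right)
  show ?thesis unfolding e by (simp add: c distrib_right field_simps)
qed

lemma sin_iexp_id:
  "complex_of_real (1 + sin th) * iexp a = iexp a + (iexp (a + th) - iexp (a + - th)) / (2 * \<i>)"
proof -
  have c: "complex_of_real (sin th) = (iexp th - iexp (- th)) / (2 * \<i>)"
    by (simp add: sin_of_real[symmetric] sin_exp_eq)
  have e: "iexp (a + th) = iexp a * iexp th" "iexp (a + - th) = iexp a * iexp (- th)"
    by (simp_all only: of_real_add of_real_minus distrib_left exp_add mult_minus_right)
  show ?thesis unfolding e by (simp add: c distrib_right field_simps)
qed

lemma sum_upd_insert:
  fixes s :: real and x u :: "'i \<Rightarrow> real"
  assumes "finite I" "i \<notin> I"
  shows "(\<Sum>j\<in>insert i I. (u(i:=s)) j * x j) = s * x i + (\<Sum>j\<in>I. u j * x j)"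
proof -
  have "(\<Sum>j\<in>I. (u(i:=s)) j * x j) = (\<Sum>j\<in>I. u j * x j)"
    by (rule sum.cong) (use assms in auto)
  then show ?thesis using assms by simp
qed

lemma char_vec_trig_weights:
  assumes fin: "finite I" and iI: "i \<notin> I"
    and M: "finite_measure M" "sets M = sets (borel_pi (insert i I))"
  shows "(CLINT x|M. iexp (s * x i)) = char_vec (insert i I) M ((\<lambda>_. 0)(i:=s))"
    and "(CLINT x|M. (1 + cos (\<Sum>j\<in>I. t j * x j)) *\<^sub>R iexp (s * x i))
      = char_vec (insert i I) M ((\<lambda>_. 0)(i:=s))
        + (char_vec (insert i I) M (t(i:=s)) + char_vec (insert i I) M ((\<lambda>j. - t j)(i:=s))) / 2"
    and "(CLINT x|M. (1 + sin (\<Sum>j\<in>I. t j * x j)) *\<^sub>R iexp (s * x i))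
      = char_vec (insert i I) M ((\<lambda>_. 0)(i:=s))
        + (char_vec (insert i I) M (t(i:=s)) - char_vec (insert i I) M ((\<lambda>j. - t j)(i:=s))) / (2 * \<i>)"
proof -
  let ?K = "insert i I"
  have u0: "(\<Sum>j\<in>?K. ((\<lambda>_. 0)(i:=s)) j * x j) = s * x i" for x :: "'a \<Rightarrow> real"
    using sum_upd_insert[OF fin iI, of "\<lambda>_. 0" s x] by simp
  have u1: "(\<Sum>j\<in>?K. (t(i:=s)) j * x j) = s * x i + (\<Sum>j\<in>I. t j * x j)" for x
    by (rule sum_upd_insert[OF fin iI])
  have u2: "(\<Sum>j\<in>?K. ((\<lambda>j. - t j)(i:=s)) j * x j) = s * x i + - (\<Sum>j\<in>I. t j * x j)" for x
    by (subst sum_upd_insert[OF fin iI]) (simp add: sum_negf)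
  have int: "integrable M (\<lambda>x. iexp (\<Sum>j\<in>?K. u j * x j))" for u
  proof -
    interpret finite_measure M by (rule M(1))
    have [measurable]: "(\<lambda>x. \<Sum>j\<in>?K. u j * x j) \<in> borel_measurable M"
      unfolding measurable_cong_sets[OF M(2) refl] using fin by measurable
    show ?thesis by (rule integrable_const_bound[where B=1]) (simp, measurable)
  qed
  show "(CLINT x|M. iexp (s * x i)) = char_vec ?K M ((\<lambda>_. 0)(i:=s))"
    unfolding char_vec_def u0 ..
  have "(CLINT x|M. (1 + cos (\<Sum>j\<in>I. t j * x j)) *\<^sub>R iexp (s * x i))
      = (CLINT x|M. iexp (\<Sum>j\<in>?K. ((\<lambda>_. 0)(i:=s)) j * x j)
           + (iexp (\<Sum>j\<in>?K. (t(i:=s)) j * x j) + iexp (\<Sum>j\<in>?K. ((\<lambda>j. - t j)(i:=s)) j * x j)) / 2)"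
    by (intro Bochner_Integration.integral_cong refl)
      (simp only: u0 u1 u2 scaleR_conv_of_real cos_iexp_id)
  also have "\<dots> = char_vec ?K M ((\<lambda>_. 0)(i:=s))
        + (char_vec ?K M (t(i:=s)) + char_vec ?K M ((\<lambda>j. - t j)(i:=s))) / 2"
    unfolding char_vec_def
    using int[of "(\<lambda>_. 0)(i:=s)"] int[of "t(i:=s)"] int[of "(\<lambda>j. - t j)(i:=s)"]
    by (simp only: Bochner_Integration.integral_add integral_divide_zero integrable_divide_zero
        Bochner_Integration.integrable_add)
  finally show "(CLINT x|M. (1 + cos (\<Sum>j\<in>I. t j * x j)) *\<^sub>R iexp (s * x i))
      = char_vec ?K M ((\<lambda>_. 0)(i:=s))
        + (char_vec ?K M (t(i:=s)) + char_vec ?K M ((\<lambda>j. - t j)(i:=s))) / 2" .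
  have "(CLINT x|M. (1 + sin (\<Sum>j\<in>I. t j * x j)) *\<^sub>R iexp (s * x i))
      = (CLINT x|M. iexp (\<Sum>j\<in>?K. ((\<lambda>_. 0)(i:=s)) j * x j)
           + (iexp (\<Sum>j\<in>?K. (t(i:=s)) j * x j) - iexp (\<Sum>j\<in>?K. ((\<lambda>j. - t j)(i:=s)) j * x j)) / (2 * \<i>))"
    by (intro Bochner_Integration.integral_cong refl)
      (simp only: u0 u1 u2 scaleR_conv_of_real sin_iexp_id)
  also have "\<dots> = char_vec ?K M ((\<lambda>_. 0)(i:=s))
        + (char_vec ?K M (t(i:=s)) - char_vec ?K M ((\<lambda>j. - t j)(i:=s))) / (2 * \<i>)"
    unfolding char_vec_def
    using int[of "(\<lambda>_. 0)(i:=s)"] int[of "t(i:=s)"] int[of "(\<lambda>j. - t j)(i:=s)"]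
    by (simp only: Bochner_Integration.integral_add Bochner_Integration.integral_diff
        integral_divide_zero integrable_divide_zero Bochner_Integration.integrable_diff)
  finally show "(CLINT x|M. (1 + sin (\<Sum>j\<in>I. t j * x j)) *\<^sub>R iexp (s * x i))
      = char_vec ?K M ((\<lambda>_. 0)(i:=s))
        + (char_vec ?K M (t(i:=s)) - char_vec ?K M ((\<lambda>j. - t j)(i:=s))) / (2 * \<i>)" .
qed

text \<open>Writing iexp theta = ((1 + cos theta) - 1) + i ((1 + sin theta) - 1) expresses an
  indicator-weighted exponential moment through integrals with nonnegative weights.\<close>
lemma indicator_iexp_decomp:
  fixes th h :: "'b \<Rightarrow> real"
  assumes M: "finite_measure M" and th[measurable]: "th \<in> borel_measurable M"
    and h[measurable]: "h \<in> borel_measurable M" and B[measurable]: "B \<in> sets borel"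
  shows "(CLINT x|M. indicator B (h x) *\<^sub>R iexp (th x))
    = ((CLINT x|M. (1 + cos (th x)) *\<^sub>R complex_of_real (indicator B (h x)))
         - (CLINT x|M. complex_of_real (indicator B (h x))))
      + \<i> * ((CLINT x|M. (1 + sin (th x)) *\<^sub>R complex_of_real (indicator B (h x)))
         - (CLINT x|M. complex_of_real (indicator B (h x))))"
proof -
  interpret finite_measure M by (rule M)
  have int: "integrable M (\<lambda>x. c x *\<^sub>R complex_of_real (indicator B (h x)))"
    if c[measurable]: "c \<in> borel_measurable M" and bound: "\<And>x. \<bar>c x\<bar> \<le> 2" for c
  proof (rule integrable_const_bound[where B=2])
    show "AE x in M. norm (c x *\<^sub>R complex_of_real (indicator B (h x))) \<le> 2"
      using bound by (auto simp: norm_mult indicator_def)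
  qed measurable
  have bounds: "\<bar>1 + cos (th x)\<bar> \<le> 2" "\<bar>1 + sin (th x)\<bar> \<le> 2" "\<bar>1::real\<bar> \<le> 2" for x
    by (simp_all add: abs_le_iff) (smt (verit) cos_ge_minus_one sin_ge_minus_one)+
  note int_cos = int[of "\<lambda>x. 1 + cos (th x)"] and int_sin = int[of "\<lambda>x. 1 + sin (th x)"]
  have i1: "integrable M (\<lambda>x. complex_of_real (indicator B (h x)))"
    using int[of "\<lambda>_. 1"] bounds by simp
  have "(CLINT x|M. indicator B (h x) *\<^sub>R iexp (th x))
     = (CLINT x|M. ((1 + cos (th x)) *\<^sub>R complex_of_real (indicator B (h x))
           - complex_of_real (indicator B (h x)))
         + \<i> * ((1 + sin (th x)) *\<^sub>R complex_of_real (indicator B (h x))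
           - complex_of_real (indicator B (h x))))"
    by (intro Bochner_Integration.integral_cong refl)
      (simp add: iexp_cos_sin scaleR_conv_of_real algebra_simps)
  also have "\<dots> = ((CLINT x|M. (1 + cos (th x)) *\<^sub>R complex_of_real (indicator B (h x)))
         - (CLINT x|M. complex_of_real (indicator B (h x))))
      + \<i> * ((CLINT x|M. (1 + sin (th x)) *\<^sub>R complex_of_real (indicator B (h x)))
         - (CLINT x|M. complex_of_real (indicator B (h x))))"
    using int_cos int_sin i1 bounds
    by (simp add: Bochner_Integration.integral_add Bochner_Integration.integral_diff)
  finally show ?thesis .
qed

text \<open>Key step of Cramer-Wold: equal joint characteristic functions on R^(insert i I) force equal
  moments E[1_B(x_i) exp(i t.x_I)], since these reduce to weighted laws of x_i with nonnegative
  weights 1, 1 + cos, 1 + sin whose weighted characteristic functions are joint ones.\<close>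
lemma indicator_char_eq:
  assumes fin: "finite I" and iI: "i \<notin> I"
    and P: "finite_measure P" "sets P = sets (borel_pi (insert i I))"
    and Q: "finite_measure Q" "sets Q = sets (borel_pi (insert i I))"
    and ch: "char_vec (insert i I) P = char_vec (insert i I) Q"
    and B: "B \<in> sets borel"
  shows "(CLINT x|P. indicator B (x i) *\<^sub>R iexp (\<Sum>j\<in>I. t j * x j))
       = (CLINT x|Q. indicator B (x i) *\<^sub>R iexp (\<Sum>j\<in>I. t j * x j))"
proof -
  let ?K = "insert i I"
  define th where "th x = (\<Sum>j\<in>I. t j * x j)" for x :: "'a \<Rightarrow> real"
  have th_meas[measurable]: "th \<in> borel_measurable (borel_pi ?K)"
    unfolding th_def using fin by measurable
  have i: "i \<in> ?K" by simp
  note trigP = char_vec_trig_weights[OF fin iI P] and trigQ = char_vec_trig_weights[OF fin iI Q]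
  have E1: "(CLINT x|P. (1::real) *\<^sub>R complex_of_real (indicator B (x i)))
      = (CLINT x|Q. (1::real) *\<^sub>R complex_of_real (indicator B (x i)))"
  proof (rule weighted_coordinate_law_eq[OF P Q i _ _ _ _ B])
    show "(CLINT x|P. (1::real) *\<^sub>R iexp (s * x i)) = (CLINT x|Q. (1::real) *\<^sub>R iexp (s * x i))" for s
      by (simp only: scaleR_one trigP(1) trigQ(1) ch)
  qed auto
  have Ec: "(CLINT x|P. (1 + cos (th x)) *\<^sub>R complex_of_real (indicator B (x i)))
      = (CLINT x|Q. (1 + cos (th x)) *\<^sub>R complex_of_real (indicator B (x i)))"
  proof (rule weighted_coordinate_law_eq[OF P Q i _ _ _ _ B])
    show "\<And>x. 0 \<le> 1 + cos (th x)" "\<And>x. 1 + cos (th x) \<le> 2"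
      using cos_ge_minus_one cos_le_one by (smt (verit))+
    show "(CLINT x|P. (1 + cos (th x)) *\<^sub>R iexp (s * x i))
        = (CLINT x|Q. (1 + cos (th x)) *\<^sub>R iexp (s * x i))" for s
      by (simp only: th_def trigP(2) trigQ(2) ch)
  qed auto
  have Es: "(CLINT x|P. (1 + sin (th x)) *\<^sub>R complex_of_real (indicator B (x i)))
      = (CLINT x|Q. (1 + sin (th x)) *\<^sub>R complex_of_real (indicator B (x i)))"
  proof (rule weighted_coordinate_law_eq[OF P Q i _ _ _ _ B])
    show "\<And>x. 0 \<le> 1 + sin (th x)" "\<And>x. 1 + sin (th x) \<le> 2"
      using sin_ge_minus_one sin_le_one by (smt (verit))+
    show "(CLINT x|P. (1 + sin (th x)) *\<^sub>R iexp (s * x i))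
        = (CLINT x|Q. (1 + sin (th x)) *\<^sub>R iexp (s * x i))" for s
      by (simp only: th_def trigP(3) trigQ(3) ch)
  qed auto
  have decomp: "(CLINT x|M. indicator B (x i) *\<^sub>R iexp (th x))
    = ((CLINT x|M. (1 + cos (th x)) *\<^sub>R complex_of_real (indicator B (x i)))
         - (CLINT x|M. (1::real) *\<^sub>R complex_of_real (indicator B (x i))))
      + \<i> * ((CLINT x|M. (1 + sin (th x)) *\<^sub>R complex_of_real (indicator B (x i)))
         - (CLINT x|M. (1::real) *\<^sub>R complex_of_real (indicator B (x i))))"
    if "finite_measure M" "sets M = sets (borel_pi ?K)" for M
    using indicator_iexp_decomp[OF that(1) _ _ B, of th "\<lambda>x. x i"] that(2)
    by (simp add: measurable_cong_sets[OF that(2) refl])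
  show ?thesis
    using decomp[OF P] decomp[OF Q] Ec Es E1 by (simp only: th_def)
qed

lemma restrict_indicator_measure:
  fixes M :: "('i \<Rightarrow> real) measure" and A :: "'i \<Rightarrow> real set" and I :: "'i set" and i :: 'i
  defines "R \<equiv> distr (density M (\<lambda>x. ennreal (indicator (A i) (x i)))) (borel_pi I) (\<lambda>x. restrict x I)"
  assumes fin: "finite I" and M: "finite_measure M" "sets M = sets (borel_pi (insert i I))"
    and A: "A \<in> (\<Pi> j\<in>insert i I. sets borel)"
  shows "finite_measure R" "sets R = sets (borel_pi I)"
    and "emeasure R (Pi\<^sub>E I A) = emeasure M (Pi\<^sub>E (insert i I) A)"
    and "char_vec I R t = (CLINT x|M. indicator (A i) (x i) *\<^sub>R iexp (\<Sum>j\<in>I. t j * x j))"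
proof -
  let ?K = "insert i I"
  interpret finite_measure M by (rule M(1))
  have Ai[measurable]: "A i \<in> sets borel" using A by auto
  have mM: "\<And>f. f \<in> borel_measurable (borel_pi ?K) \<Longrightarrow> f \<in> borel_measurable M"
    using measurable_cong_sets[OF M(2) refl] by blast
  have mg[measurable]: "(\<lambda>x. indicator (A i) (x i) :: real) \<in> borel_measurable M"
    by (intro mM) measurable
  have mr[measurable]: "(\<lambda>x. restrict x I) \<in> measurable M (borel_pi I)"
    by (subst measurable_cong_sets[OF M(2) refl]) (rule measurable_restrict_subset, auto)
  have spM: "space M = space (borel_pi ?K)" using sets_eq_imp_space_eq[OF M(2)] .
  show "sets R = sets (borel_pi I)" unfolding R_def by simp
  have pre: "(\<lambda>x. restrict x I) -` space (borel_pi I) \<inter> space M = space M"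
    using measurable_space[OF mr] by auto
  have "emeasure R (space R) = (\<integral>\<^sup>+ x. ennreal (indicator (A i) (x i)) \<partial>M)"
    unfolding R_def
    by (subst emeasure_distr) (auto simp: pre emeasure_density intro!: nn_integral_cong)
  also have "\<dots> \<le> (\<integral>\<^sup>+ x. 1 \<partial>M)" by (intro nn_integral_mono) (auto simp: indicator_def)
  also have "\<dots> < \<infinity>" by (simp add: less_top[symmetric])
  finally show "finite_measure R" by (intro finite_measureI) simp
  have boxI: "Pi\<^sub>E I A \<in> sets (borel_pi I)" using A fin by (intro sets_PiM_I_finite) auto
  have boxK: "Pi\<^sub>E ?K A \<in> sets M" unfolding M(2) using A fin by (intro sets_PiM_I_finite) auto
  have "emeasure R (Pi\<^sub>E I A) = (\<integral>\<^sup>+ x. ennreal (indicator (A i) (x i))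
         * indicator ((\<lambda>x. restrict x I) -` Pi\<^sub>E I A \<inter> space M) x \<partial>M)"
    unfolding R_def using boxI by (subst emeasure_distr) (auto simp: emeasure_density)
  also have "\<dots> = (\<integral>\<^sup>+ x. indicator (Pi\<^sub>E ?K A) x \<partial>M)"
    by (intro nn_integral_cong) (auto simp: spM space_PiM PiE_iff split: split_indicator)
  also have "\<dots> = emeasure M (Pi\<^sub>E ?K A)" using boxK by simp
  finally show "emeasure R (Pi\<^sub>E I A) = emeasure M (Pi\<^sub>E ?K A)" .
  have "char_vec I R t = (CLINT x|density M (\<lambda>x. ennreal (indicator (A i) (x i) :: real)).
          iexp (\<Sum>j\<in>I. t j * restrict x I j))"
    unfolding R_def char_vec_def using fin by (subst integral_distr) auto
  also have "\<dots> = (CLINT x|M. indicator (A i) (x i) *\<^sub>R iexp (\<Sum>j\<in>I. t j * restrict x I j))"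
    using fin by (subst integral_density) (auto intro!: mM)
  also have "\<dots> = (CLINT x|M. indicator (A i) (x i) *\<^sub>R iexp (\<Sum>j\<in>I. t j * x j))"
    by (intro Bochner_Integration.integral_cong refl arg_cong[where f="\<lambda>z. _ *\<^sub>R iexp z"] sum.cong)
      auto
  finally show "char_vec I R t = (CLINT x|M. indicator (A i) (x i) *\<^sub>R iexp (\<Sum>j\<in>I. t j * x j))" .
qed

text \<open>Finite measures on R^K, K finite, that agree on all boxes are equal: boxes form an
  intersection-stable generator of the product sigma-algebra.\<close>
lemma finite_measure_eq_on_boxes:
  assumes K: "finite K" and P: "finite_measure P" "sets P = sets (borel_pi K)"
    and Q: "sets Q = sets (borel_pi K)"
    and box: "\<And>A. A \<in> (\<Pi> j\<in>K. sets borel) \<Longrightarrow> emeasure P (Pi\<^sub>E K A) = emeasure Q (Pi\<^sub>E K A)"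
  shows "P = Q"
proof -
  let ?\<Omega> = "\<Pi>\<^sub>E j\<in>K. space (borel :: real measure)"
  show "P = Q"
  proof (rule measure_eqI_generator_eq[where E="prod_algebra K (\<lambda>_. borel :: real measure)"
        and \<Omega>="?\<Omega>" and A="\<lambda>_. ?\<Omega>"])
    show "Int_stable (prod_algebra K (\<lambda>_. borel :: real measure))" by (rule Int_stable_prod_algebra)
    show "prod_algebra K (\<lambda>_. borel :: real measure) \<subseteq> Pow ?\<Omega>"
      by (rule prod_algebra_sets_into_space)
    show "sets P = sigma_sets ?\<Omega> (prod_algebra K (\<lambda>_. borel :: real measure))"
      using P(2) by (simp add: sets_PiM)
    show "sets Q = sigma_sets ?\<Omega> (prod_algebra K (\<lambda>_. borel :: real measure))"
      using Q by (simp add: sets_PiM)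
    fix X assume "X \<in> prod_algebra K (\<lambda>_. borel :: real measure)"
    then obtain A where "X = Pi\<^sub>E K A" "A \<in> (\<Pi> j\<in>K. sets borel)" by (rule prod_algebraE_all)
    then show "emeasure P X = emeasure Q X" using box by simp
  next
    show "range (\<lambda>_. ?\<Omega>) \<subseteq> prod_algebra K (\<lambda>_. borel :: real measure)"
      using prod_algebraI_finite[OF K, of "\<lambda>_. UNIV" "\<lambda>_. borel"] by auto
    show "(\<Union>i. ?\<Omega>) = ?\<Omega>" by simp
    fix j :: nat
    show "emeasure P ?\<Omega> \<noteq> \<infinity>" using P(1) by (simp add: finite_measure.emeasure_finite)
  qed
qed

text \<open>By induction on I: boxes are compared after integrating out one coordinate against an indicator,
  and boxes generate the product sigma-algebra.\<close>
theorem cramer_wold: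
  assumes "finite I" "finite_measure P" "finite_measure Q"
    "sets P = sets (borel_pi I)" "sets Q = sets (borel_pi I)" "char_vec I P = char_vec I Q"
  shows "P = Q"
  using assms
proof (induction I arbitrary: P Q rule: finite_induct)
  case empty
  interpret P: finite_measure P by fact
  interpret Q: finite_measure Q by fact
  have sp: "space P = {\<lambda>_. undefined}" "space Q = {\<lambda>_. undefined}"
    using sets_eq_imp_space_eq[OF empty(3)] sets_eq_imp_space_eq[OF empty(4)]
    by (simp_all add: space_PiM_empty)
  have "char_vec {} P (\<lambda>_. 0) = char_vec {} Q (\<lambda>_. 0)" using empty(5) by simp
  then have "complex_of_real (measure P (space P)) = complex_of_real (measure Q (space Q))"
    by (simp add: char_vec_def)
  then have mass: "emeasure P (space P) = emeasure Q (space Q)"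
    by (simp add: P.emeasure_eq_measure Q.emeasure_eq_measure)
  show "P = Q"
  proof (rule measure_eqI)
    show "sets P = sets Q" using empty by simp
    fix A assume "A \<in> sets P"
    then have "A = {} \<or> A = {\<lambda>_. undefined}" using empty(3) by (simp add: sets_PiM_empty)
    then show "emeasure P A = emeasure Q A" using mass sp by auto
  qed
next
  case (insert i I)
  let ?K = "insert i I"
  have P: "finite_measure P" "sets P = sets (borel_pi ?K)"
    and Q: "finite_measure Q" "sets Q = sets (borel_pi ?K)" by fact+
  have box: "emeasure P (Pi\<^sub>E ?K A) = emeasure Q (Pi\<^sub>E ?K A)" if A: "A \<in> (\<Pi> j\<in>?K. sets borel)" for A
  proof -
    note RP = restrict_indicator_measure[OF insert(1) P A]
      and RQ = restrict_indicator_measure[OF insert(1) Q A]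
    have Ai: "A i \<in> sets borel" using A by auto
    have "distr (density P (\<lambda>x. ennreal (indicator (A i) (x i)))) (borel_pi I) (\<lambda>x. restrict x I)
        = distr (density Q (\<lambda>x. ennreal (indicator (A i) (x i)))) (borel_pi I) (\<lambda>x. restrict x I)"
    proof (rule insert.IH)
      show "char_vec I (distr (density P (\<lambda>x. ennreal (indicator (A i) (x i)))) (borel_pi I) (\<lambda>x. restrict x I))
          = char_vec I (distr (density Q (\<lambda>x. ennreal (indicator (A i) (x i)))) (borel_pi I) (\<lambda>x. restrict x I))"
        by (rule ext) (simp only: RP(4) RQ(4) indicator_char_eq[OF insert(1,2) P Q insert.prems(5) Ai])
    qed (simp_all add: RP(1,2) RQ(1,2))
    then show ?thesis using RP(3) RQ(3) by simp
  qed
  show "P = Q"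
    by (rule finite_measure_eq_on_boxes[OF finite.insertI[OF insert(1)] P(1) P(2) Q(2) box])
qed

section \<open>Conditional laws given observations\<close>

text \<open>If the noise e is independent of Y with law N(0, v), then e + L(Y) has conditional law
  N(L(y), v) given Y = y: disintegrate the product law of (Y, e) along its first factor.\<close>
lemma has_cond_distr_indep_noise:
  fixes Y :: "'a \<Rightarrow> 'b" and e :: "'a \<Rightarrow> real"
  assumes P: "prob_space M" and Ym[measurable]: "Y \<in> measurable M N"
    and em[measurable]: "e \<in> borel_measurable M" and Lm[measurable]: "L \<in> borel_measurable N"
    and X: "\<And>\<omega>. \<omega> \<in> space M \<Longrightarrow> X \<omega> = e \<omega> + L (Y \<omega>)" and v: "0 \<le> v"
    and joint: "distr M (N \<Otimes>\<^sub>M borel) (\<lambda>\<omega>. (Y \<omega>, e \<omega>)) = distr M N Y \<Otimes>\<^sub>M gauss 0 v"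
  shows "has_cond_distr M X N Y (\<lambda>z. gauss (L z) v)"
  unfolding has_cond_distr_def
proof (intro ballI)
  interpret G: real_distribution "gauss 0 v" by (rule real_distribution_gauss[OF v])
  fix A B assume A[measurable]: "A \<in> sets (borel :: real measure)" and B[measurable]: "B \<in> sets N"
  define S where "S = {p \<in> space (N \<Otimes>\<^sub>M borel). snd p + L (fst p) \<in> A \<and> fst p \<in> B}"
  have S[measurable]: "S \<in> sets (N \<Otimes>\<^sub>M borel)" unfolding S_def by measurable
  have sets_prod: "sets (distr M N Y \<Otimes>\<^sub>M gauss 0 v) = sets (N \<Otimes>\<^sub>M borel)"
    by (intro sets_pair_measure_cong) simp_all
  have "{\<omega> \<in> space M. X \<omega> \<in> A \<and> Y \<omega> \<in> B} = (\<lambda>\<omega>. (Y \<omega>, e \<omega>)) -` S \<inter> space M"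
    using X measurable_space[OF Ym] by (auto simp: S_def space_pair_measure)
  then have "emeasure M {\<omega> \<in> space M. X \<omega> \<in> A \<and> Y \<omega> \<in> B}
      = emeasure (distr M (N \<Otimes>\<^sub>M borel) (\<lambda>\<omega>. (Y \<omega>, e \<omega>))) S"
    by (simp add: emeasure_distr)
  also have "\<dots> = emeasure (distr M N Y \<Otimes>\<^sub>M gauss 0 v) S" by (simp only: joint)
  also have "\<dots> = (\<integral>\<^sup>+ y. emeasure (gauss 0 v) (Pair y -` S) \<partial>distr M N Y)"
    by (rule G.emeasure_pair_measure_alt) (simp add: sets_prod)
  also have "\<dots> = (\<integral>\<^sup>+ y. indicator B y * emeasure (gauss (L y) v) A \<partial>distr M N Y)"
  proof (rule nn_integral_cong)
    fix y assume "y \<in> space (distr M N Y)"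
    then have "Pair y -` S = (if y \<in> B then {w. w + L y \<in> A} else {})"
      by (auto simp: S_def space_pair_measure)
    then show "emeasure (gauss 0 v) (Pair y -` S) = indicator B y * emeasure (gauss (L y) v) A"
      using emeasure_gauss_shift[OF v A, of "L y"] by simp
  qed
  finally show "emeasure M {\<omega> \<in> space M. X \<omega> \<in> A \<and> Y \<omega> \<in> B}
      = (\<integral>\<^sup>+ y. indicator B y * emeasure (gauss (L y) v) A \<partial>distr M (N) Y)" .
qed

text \<open>A pair (y, w) of a vector y in R^UNIV and a real w, recorded as a vector indexed by
  insert None (Some ` J): w sits at None and y_j at Some j for j in J.\<close>
definition join_coords :: "'j set \<Rightarrow> ('j \<Rightarrow> real) \<times> real \<Rightarrow> 'j option \<Rightarrow> real" where
  "join_coords J p = (\<lambda>k\<in>insert None (Some ` J). case k of None \<Rightarrow> snd p | Some j \<Rightarrow> fst p j)"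

lemma join_coords_measurable[measurable]:
  "join_coords J \<in> measurable (borel_pi UNIV \<Otimes>\<^sub>M borel) (borel_pi (insert None (Some ` J)))"
  unfolding join_coords_def
proof (rule measurable_restrict)
  fix k :: "'a option"
  show "(\<lambda>p. case k of None \<Rightarrow> snd p | Some j \<Rightarrow> fst p j) \<in> borel_measurable (borel_pi UNIV \<Otimes>\<^sub>M borel)"
  proof (cases k)
    case (Some j)
    then show ?thesis by simp measurable
  qed simp
qed

lemma sum_join_coords:
  assumes "finite J"
  shows "(\<Sum>k\<in>insert None (Some ` J). t k * join_coords J p k) = t None * snd p + (\<Sum>j\<in>J. t (Some j) * fst p j)"
proof -
  have "(\<Sum>k\<in>insert None (Some ` J). t k * join_coords J p k)
      = (\<Sum>k\<in>insert None (Some ` J). t k * (case k of None \<Rightarrow> snd p | Some j \<Rightarrow> fst p j))"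
    unfolding join_coords_def by (rule sum.cong) auto
  then show ?thesis using assms by (simp add: sum.reindex)
qed

lemma char_vec_join_product:
  fixes N :: "('j \<Rightarrow> real) measure" and G :: "real measure"
  assumes J: "finite J" and N: "prob_space N" and sN[measurable_cong]: "sets N = sets (borel_pi UNIV)"
    and G: "real_distribution G"
  shows "char_vec (insert None (Some ` J))
           (distr (N \<Otimes>\<^sub>M G) (borel_pi (insert None (Some ` J))) (join_coords J)) t
       = (CLINT y|N. iexp (\<Sum>j\<in>J. t (Some j) * y j)) * char G (t None)"
proof -
  interpret N: prob_space N by (rule N)
  interpret G: real_distribution G by (rule G)
  interpret NG: pair_prob_space N G ..
  let ?f = "\<lambda>y w. iexp (\<Sum>j\<in>J. t (Some j) * y j) * iexp (t None * w)"
  have join_m: "join_coords J \<in> measurable (N \<Otimes>\<^sub>M G) (borel_pi (insert None (Some ` J)))"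
    using join_coords_measurable
    unfolding measurable_cong_sets[OF sets_pair_measure_cong[OF sN G.events_eq_borel] refl] .
  have "char_vec (insert None (Some ` J))
          (distr (N \<Otimes>\<^sub>M G) (borel_pi (insert None (Some ` J))) (join_coords J)) t
      = (CLINT p|N \<Otimes>\<^sub>M G. iexp (\<Sum>k\<in>insert None (Some ` J). t k * join_coords J p k))"
    unfolding char_vec_def using J join_m by (subst integral_distr) auto
  also have "\<dots> = (CLINT p|N \<Otimes>\<^sub>M G. case_prod ?f p)"
    by (intro Bochner_Integration.integral_cong refl)
      (simp add: sum_join_coords[OF J] case_prod_beta' algebra_simps flip: exp_add)
  also have "\<dots> = (CLINT y|N. (CLINT w|G. ?f y w))"
  proof -
    have "(\<lambda>(y, w). ?f y w) \<in> borel_measurable (N \<Otimes>\<^sub>M G)" by measurable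
    then have "integrable (N \<Otimes>\<^sub>M G) (case_prod ?f)"
      by (intro NG.P.integrable_const_bound[where B=1]) (auto simp: norm_mult)
    then show ?thesis by (rule NG.integral_fst[symmetric])
  qed
  also have "\<dots> = (CLINT y|N. iexp (\<Sum>j\<in>J. t (Some j) * y j)) * char G (t None)"
    unfolding char_def by simp
  finally show ?thesis .
qed

text \<open>For Y supported on J, the law of join_coords(Y, e) determines the law of the pair (Y, e):
  the pair is read off from join_coords up to truncating y outside J, which does not affect Y.\<close>
lemma pair_law_from_join_coords:
  fixes M :: "'a measure" and Y :: "'a \<Rightarrow> 'j \<Rightarrow> real" and e :: "'a \<Rightarrow> real" and G :: "real measure"
  assumes P: "prob_space M" and Ym[measurable]: "Y \<in> measurable M (borel_pi UNIV)"
    and Y0: "\<And>\<omega> j. \<omega> \<in> space M \<Longrightarrow> j \<notin> J \<Longrightarrow> Y \<omega> j = 0"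
    and em[measurable]: "e \<in> borel_measurable M" and G: "real_distribution G"
    and eq: "distr M (borel_pi (insert None (Some ` J))) (\<lambda>\<omega>. join_coords J (Y \<omega>, e \<omega>))
           = distr (distr M (borel_pi UNIV) Y \<Otimes>\<^sub>M G) (borel_pi (insert None (Some ` J))) (join_coords J)"
  shows "distr M (borel_pi UNIV \<Otimes>\<^sub>M borel) (\<lambda>\<omega>. (Y \<omega>, e \<omega>)) = distr M (borel_pi UNIV) Y \<Otimes>\<^sub>M G"
proof -
  interpret prob_space M by (rule P)
  interpret G: real_distribution G by (rule G)
  define I where "I = insert None (Some ` J)"
  define N where "N = distr M (borel_pi UNIV) Y"
  define trunc where "trunc y = (\<lambda>j. if j \<in> J then y j else 0)" for y :: "'j \<Rightarrow> real"
  define split_obs where "split_obs x = (\<lambda>j. if j \<in> J then x (Some j) else 0, x None)"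
    for x :: "'j option \<Rightarrow> real"
  have eq': "distr M (borel_pi I) (\<lambda>\<omega>. join_coords J (Y \<omega>, e \<omega>))
      = distr (N \<Otimes>\<^sub>M G) (borel_pi I) (join_coords J)"
    using eq unfolding I_def N_def .
  have sN: "sets N = sets (borel_pi UNIV)" by (simp add: N_def)
  have join_NG[measurable]: "join_coords J \<in> measurable (N \<Otimes>\<^sub>M G) (borel_pi I)"
    unfolding measurable_cong_sets[OF sets_pair_measure_cong[OF sN G.events_eq_borel] refl] I_def
    by (rule join_coords_measurable)
  have join_M[measurable]: "(\<lambda>\<omega>. join_coords J (Y \<omega>, e \<omega>)) \<in> measurable M (borel_pi I)"
    unfolding I_def by measurable
  have truncm[measurable]: "trunc \<in> measurable (borel_pi UNIV) (borel_pi UNIV)"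
    unfolding trunc_def by (rule measurable_PiM_single') simp_all
  have splitm[measurable]: "split_obs \<in> measurable (borel_pi I) (borel_pi UNIV \<Otimes>\<^sub>M borel)"
  proof -
    have "(\<lambda>x. \<lambda>j. if j \<in> J then x (Some j) else 0) \<in> measurable (borel_pi I) (borel_pi UNIV)"
    proof (rule measurable_PiM_single')
      fix j
      show "(\<lambda>x. if j \<in> J then x (Some j) else 0) \<in> borel_measurable (borel_pi I)"
        by (cases "j \<in> J") (auto simp: I_def)
    qed simp
    moreover have "(\<lambda>x. x None) \<in> borel_measurable (borel_pi I)" by (simp add: I_def)
    ultimately show ?thesis unfolding split_obs_def by measurable
  qed
  have split_join: "split_obs (join_coords J p) = (trunc (fst p), snd p)" for p
    by (auto simp: split_obs_def join_coords_def trunc_def)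
  have N_trunc: "distr N (borel_pi UNIV) trunc = N"
  proof -
    have "distr N (borel_pi UNIV) trunc = distr M (borel_pi UNIV) (trunc \<circ> Y)"
      unfolding N_def by (rule distr_distr) simp_all
    also have "\<dots> = N"
      unfolding N_def by (rule distr_cong) (auto simp: trunc_def Y0 fun_eq_iff)
    finally show ?thesis .
  qed
  have G_id: "distr G borel (\<lambda>w. w) = G" by (rule distr_id2) simp
  have "distr M (borel_pi UNIV \<Otimes>\<^sub>M borel) (\<lambda>\<omega>. (Y \<omega>, e \<omega>))
      = distr M (borel_pi UNIV \<Otimes>\<^sub>M borel) (split_obs \<circ> (\<lambda>\<omega>. join_coords J (Y \<omega>, e \<omega>)))"
    by (rule distr_cong) (auto simp: split_join trunc_def Y0 fun_eq_iff)
  also have "\<dots> = distr (distr M (borel_pi I) (\<lambda>\<omega>. join_coords J (Y \<omega>, e \<omega>)))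
                    (borel_pi UNIV \<Otimes>\<^sub>M borel) split_obs"
    by (rule distr_distr[symmetric]) simp_all
  also have "\<dots> = distr (N \<Otimes>\<^sub>M G) (borel_pi UNIV \<Otimes>\<^sub>M borel) (split_obs \<circ> join_coords J)"
    unfolding eq' by (rule distr_distr) simp_all
  also have "\<dots> = distr (N \<Otimes>\<^sub>M G) (borel_pi UNIV \<Otimes>\<^sub>M borel) (\<lambda>(y, w). (trunc y, w))"
    by (rule distr_cong) (auto simp: split_join)
  also have "\<dots> = distr N (borel_pi UNIV) trunc \<Otimes>\<^sub>M distr G borel (\<lambda>w. w)"
  proof (rule pair_measure_distr[symmetric])
    show "trunc \<in> measurable N (borel_pi UNIV)" unfolding N_def by simp
    show "sigma_finite_measure (distr G borel (\<lambda>w. w))"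
      unfolding G_id by (rule G.sigma_finite_measure_axioms)
  qed simp
  finally show ?thesis unfolding N_trunc G_id unfolding N_def .
qed

text \<open>Cramer-Wold identifies the laws of join_coords(Y, e)
  and of join_coords under the product law.\<close>
lemma joint_law_by_char:
  fixes M :: "'a measure" and Y :: "'a \<Rightarrow> 'j \<Rightarrow> real" and e :: "'a \<Rightarrow> real" and G :: "real measure"
  assumes P: "prob_space M" and J: "finite J"
    and Ym[measurable]: "Y \<in> measurable M (borel_pi UNIV)"
    and Y0: "\<And>\<omega> j. \<omega> \<in> space M \<Longrightarrow> j \<notin> J \<Longrightarrow> Y \<omega> j = 0"
    and em[measurable]: "e \<in> borel_measurable M" and G: "real_distribution G"
    and factor: "\<And>c0 c. (CLINT \<omega>|M. iexp (c0 * e \<omega> + (\<Sum>j\<in>J. c j * Y \<omega> j)))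
                         = (CLINT \<omega>|M. iexp (\<Sum>j\<in>J. c j * Y \<omega> j)) * char G c0"
  shows "distr M (borel_pi UNIV \<Otimes>\<^sub>M borel) (\<lambda>\<omega>. (Y \<omega>, e \<omega>)) = distr M (borel_pi UNIV) Y \<Otimes>\<^sub>M G"
proof -
  interpret prob_space M by (rule P)
  interpret G: real_distribution G by (rule G)
  define I where "I = insert None (Some ` J)"
  define N where "N = distr M (borel_pi UNIV) Y"
  interpret N: prob_space N unfolding N_def by (rule prob_space_distr) simp
  interpret NG: pair_prob_space N G ..
  have finI: "finite I" using J unfolding I_def by simp
  have sN: "sets N = sets (borel_pi UNIV)" by (simp add: N_def)
  have join_NG[measurable]: "join_coords J \<in> measurable (N \<Otimes>\<^sub>M G) (borel_pi I)"
    unfolding measurable_cong_sets[OF sets_pair_measure_cong[OF sN G.events_eq_borel] refl] I_def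
    by (rule join_coords_measurable)
  have join_M[measurable]: "(\<lambda>\<omega>. join_coords J (Y \<omega>, e \<omega>)) \<in> measurable M (borel_pi I)"
    unfolding I_def by measurable
  have cw: "distr M (borel_pi I) (\<lambda>\<omega>. join_coords J (Y \<omega>, e \<omega>))
      = distr (N \<Otimes>\<^sub>M G) (borel_pi I) (join_coords J)"
  proof (rule cramer_wold[OF finI])
    show "finite_measure (distr M (borel_pi I) (\<lambda>\<omega>. join_coords J (Y \<omega>, e \<omega>)))"
      using prob_space_distr[OF join_M] by (simp add: prob_space_def)
    show "finite_measure (distr (N \<Otimes>\<^sub>M G) (borel_pi I) (join_coords J))"
      using prob_space.prob_space_distr[OF NG.prob_space_axioms join_NG] by (simp add: prob_space_def)
    show "char_vec I (distr M (borel_pi I) (\<lambda>\<omega>. join_coords J (Y \<omega>, e \<omega>)))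
        = char_vec I (distr (N \<Otimes>\<^sub>M G) (borel_pi I) (join_coords J))"
    proof
      fix t
      have "char_vec I (distr M (borel_pi I) (\<lambda>\<omega>. join_coords J (Y \<omega>, e \<omega>))) t
          = (CLINT \<omega>|M. iexp (\<Sum>k\<in>I. t k * join_coords J (Y \<omega>, e \<omega>) k))"
        unfolding char_vec_def using finI by (subst integral_distr) auto
      also have "\<dots> = (CLINT \<omega>|M. iexp (t None * e \<omega> + (\<Sum>j\<in>J. t (Some j) * Y \<omega> j)))"
        unfolding I_def sum_join_coords[OF J] by simp
      also have "\<dots> = (CLINT y|N. iexp (\<Sum>j\<in>J. t (Some j) * y j)) * char G (t None)"
        unfolding factor N_def by (subst integral_distr) auto
      also have "\<dots> = char_vec I (distr (N \<Otimes>\<^sub>M G) (borel_pi I) (join_coords J)) t"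
        unfolding I_def by (rule char_vec_join_product[OF J N.prob_space_axioms sN G, symmetric])
      finally show "char_vec I (distr M (borel_pi I) (\<lambda>\<omega>. join_coords J (Y \<omega>, e \<omega>))) t
          = char_vec I (distr (N \<Otimes>\<^sub>M G) (borel_pi I) (join_coords J)) t" .
    qed
  qed simp_all
  have "distr M (borel_pi (insert None (Some ` J))) (\<lambda>\<omega>. join_coords J (Y \<omega>, e \<omega>))
      = distr (distr M (borel_pi UNIV) Y \<Otimes>\<^sub>M G) (borel_pi (insert None (Some ` J))) (join_coords J)"
    using cw unfolding I_def N_def .
  from pair_law_from_join_coords[OF P Ym Y0 em G this] show ?thesis .
qed

text \<open>Gaussian noise that is uncorrelated with a finitely supported Gaussian vector Y is independent
  of it: if every combination c0 e + c.Y is Gaussian with a variance c0^2 v + q(c) free of cross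
  terms, then the joint characteristic function factorises and (Y, e) has the product law.\<close>
lemma joint_law_uncorrelated_gauss:
  fixes M :: "'a measure" and Y :: "'a \<Rightarrow> 'j \<Rightarrow> real" and e :: "'a \<Rightarrow> real"
    and mY qY :: "('j \<Rightarrow> real) \<Rightarrow> real"
  assumes P: "prob_space M" and J: "finite J"
    and Ym[measurable]: "Y \<in> measurable M (borel_pi UNIV)"
    and Y0: "\<And>\<omega> j. \<omega> \<in> space M \<Longrightarrow> j \<notin> J \<Longrightarrow> Y \<omega> j = 0"
    and em[measurable]: "e \<in> borel_measurable M" and v: "0 \<le> v"
    and law: "\<And>c0 c. distr M borel (\<lambda>\<omega>. c0 * e \<omega> + (\<Sum>j\<in>J. c j * Y \<omega> j))
                = gauss (mY c) (c0\<^sup>2 * v + qY c)"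
    and q: "\<And>c. 0 \<le> qY c"
  shows "distr M (borel_pi UNIV \<Otimes>\<^sub>M borel) (\<lambda>\<omega>. (Y \<omega>, e \<omega>))
       = distr M (borel_pi UNIV) Y \<Otimes>\<^sub>M gauss 0 v"
proof (rule joint_law_by_char[OF P J Ym Y0 em real_distribution_gauss[OF v]])
  fix c0 c
  have comb: "(CLINT \<omega>|M. iexp (a * e \<omega> + (\<Sum>j\<in>J. c j * Y \<omega> j)))
      = exp (\<i> * complex_of_real (mY c) - complex_of_real ((a\<^sup>2 * v + qY c) / 2))" for a
  proof -
    have "(CLINT \<omega>|M. iexp (a * e \<omega> + (\<Sum>j\<in>J. c j * Y \<omega> j)))
        = char (gauss (mY c) (a\<^sup>2 * v + qY c)) 1"
      by (subst char_as_integral) (simp_all add: law)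
    then show ?thesis using v q[of c] by (simp add: char_gauss)
  qed
  have obs: "(CLINT \<omega>|M. iexp (\<Sum>j\<in>J. c j * Y \<omega> j))
      = exp (\<i> * complex_of_real (mY c) - complex_of_real ((0\<^sup>2 * v + qY c) / 2))"
    using comb[of 0] by simp
  show "(CLINT \<omega>|M. iexp (c0 * e \<omega> + (\<Sum>j\<in>J. c j * Y \<omega> j)))
      = (CLINT \<omega>|M. iexp (\<Sum>j\<in>J. c j * Y \<omega> j)) * char (gauss 0 v) c0"
    unfolding comb obs using v q[of c]
    by (simp add: char_gauss flip: exp_add) (intro arg_cong[where f=exp], simp add: field_simps)
qed

section \<open>The kriging system\<close>

text \<open>A nonsingular matrix indexed by a finite set D yields a solvable system R a = v: enumerate D,
  so that R becomes a square matrix of nonzero determinant, and apply its inverse.\<close>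
lemma invertible_on_solvable:
  fixes R :: "'q \<Rightarrow> 'q \<Rightarrow> real"
  assumes fin: "finite D" and inv: "invertible_on D R"
  shows "\<exists>a. (\<forall>y. y \<notin> D \<longrightarrow> a y = 0) \<and> (\<forall>x\<in>D. (\<Sum>y\<in>D. R x y * a y) = v x)"
proof -
  define n where "n = card D"
  obtain e where e: "bij_betw e {0..<n} D"
    using ex_bij_betw_nat_finite[OF fin] unfolding n_def by blast
  define idx where "idx = the_inv_into {0..<n} e"
  have idx: "idx y < n" "e (idx y) = y" if "y \<in> D" for y
    using bij_betw_apply[OF bij_betw_the_inv_into[OF e] that] f_the_inv_into_f_bij_betw[OF e that]
    unfolding idx_def by auto
  have idx_e: "idx (e l) = l" if "l < n" for l
    using the_inv_into_f_f[OF bij_betw_imp_inj_on[OF e]] that unfolding idx_def by simp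
  define A where "A = Matrix.mat n n (\<lambda>(k, l). R (e k) (e l))"
  have A: "A \<in> carrier_mat n n" unfolding A_def by simp
  have lift: "(\<Sum>y\<in>D. R x y * (if y \<in> D then u $ idx y else 0)) = (A *\<^sub>v u) $ idx x"
    if x: "x \<in> D" and u: "u \<in> carrier_vec n" for x u
  proof -
    have "(\<Sum>y\<in>D. R x y * (if y \<in> D then u $ idx y else 0)) = (\<Sum>l\<in>{0..<n}. R x (e l) * u $ l)"
      using sum.reindex_bij_betw[OF e, of "\<lambda>y. R x y * (if y \<in> D then u $ idx y else 0)"]
        bij_betw_apply[OF e] idx_e by (auto intro!: sum.cong)
    also have "\<dots> = (A *\<^sub>v u) $ idx x"
      using idx[OF x] u unfolding A_def by (simp add: scalar_prod_def)
    finally show ?thesis .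
  qed
  have "Determinant.det A \<noteq> 0"
  proof
    assume "Determinant.det A = 0"
    then obtain u where u: "u \<in> carrier_vec n" "u \<noteq> 0\<^sub>v n" "A *\<^sub>v u = 0\<^sub>v n"
      using det_0_iff_vec_prod_zero_field[OF A] by blast
    have "\<forall>x\<in>D. (\<Sum>y\<in>D. R x y * (if y \<in> D then u $ idx y else 0)) = 0"
      using lift u idx by simp
    then have zero: "\<forall>y\<in>D. (if y \<in> D then u $ idx y else 0) = 0"
      using spec[OF inv[unfolded invertible_on_def], of "\<lambda>y. if y \<in> D then u $ idx y else 0"]
      by blast
    have "u = 0\<^sub>v n"
    proof (rule eq_vecI)
      fix l assume "l < dim_vec (0\<^sub>v n :: real Matrix.vec)"
      then have l: "l < n" by simp
      then have "e l \<in> D" using bij_betw_apply[OF e] by simp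
      then show "u $ l = 0\<^sub>v n $ l" using zero l idx_e[OF l] by force
    qed (use u(1) in simp)
    then show False using u(2) by simp
  qed
  from det_non_zero_imp_unit[OF A this, of "()"]
  obtain Q where Q: "Q \<in> carrier_mat n n" "A * Q = 1\<^sub>m n"
    unfolding Units_def ring_mat_def by auto
  define b where "b = Matrix.vec n (\<lambda>k. v (e k))"
  define c where "c = Q *\<^sub>v b"
  have c: "c \<in> carrier_vec n" unfolding c_def b_def using Q by simp
  have Ac: "A *\<^sub>v c = b" unfolding c_def using Q A
    by (simp add: assoc_mult_mat_vec[symmetric, of _ n n _ n] b_def)
  show ?thesis
  proof (intro exI conjI allI impI ballI)
    fix x assume x: "x \<in> D"
    show "(\<Sum>y\<in>D. R x y * (if y \<in> D then c $ idx y else 0)) = v x"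
      using lift[OF x c] Ac idx[OF x] unfolding b_def by simp
  qed simp
qed

text \<open>The solution R^{-1} v is unique, so mat_solve is well defined.\<close>
lemma mat_solve_spec:
  assumes fin: "finite D" and inv: "invertible_on D R"
  shows "(\<forall>y. y \<notin> D \<longrightarrow> mat_solve D R v y = 0)
       \<and> (\<forall>x\<in>D. (\<Sum>y\<in>D. R x y * mat_solve D R v y) = v x)"
proof -
  have "\<exists>!a. (\<forall>y. y \<notin> D \<longrightarrow> a y = 0) \<and> (\<forall>x\<in>D. (\<Sum>y\<in>D. R x y * a y) = v x)"
  proof (rule ex_ex1I)
    show "\<exists>a. (\<forall>y. y \<notin> D \<longrightarrow> a y = 0) \<and> (\<forall>x\<in>D. (\<Sum>y\<in>D. R x y * a y) = v x)"
      by (rule invertible_on_solvable[OF fin inv])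
    fix a b
    assume a: "(\<forall>y. y \<notin> D \<longrightarrow> a y = 0) \<and> (\<forall>x\<in>D. (\<Sum>y\<in>D. R x y * a y) = v x)"
       and b: "(\<forall>y. y \<notin> D \<longrightarrow> b y = 0) \<and> (\<forall>x\<in>D. (\<Sum>y\<in>D. R x y * b y) = v x)"
    have "\<forall>x\<in>D. (\<Sum>y\<in>D. R x y * (a y - b y)) = 0"
      using a b by (simp add: right_diff_distrib sum_subtractf)
    then have "\<forall>y\<in>D. a y - b y = 0"
      using spec[OF inv[unfolded invertible_on_def], of "\<lambda>y. a y - b y"] by blast
    then show "a = b" using a b by (auto simp: fun_eq_iff)
  qed
  then show ?thesis unfolding mat_solve_def by (rule theI')
qed

lemma mat_solve_out: "finite D \<Longrightarrow> invertible_on D R \<Longrightarrow> y \<notin> D \<Longrightarrow> mat_solve D R v y = 0"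
  using mat_solve_spec by blast

lemma mat_solve_eq:
  "finite D \<Longrightarrow> invertible_on D R \<Longrightarrow> x \<in> D \<Longrightarrow> (\<Sum>y\<in>D. R x y * mat_solve D R v y) = v x"
  using mat_solve_spec by blast

lemma krig_sym:
  assumes fin: "finite D" and inv: "invertible_on D R" and sym: "\<And>x y. R x y = R y x"
  shows "krig D R u v = (\<Sum>y\<in>D. mat_solve D R u y * v y)"
proof -
  let ?a = "mat_solve D R u" and ?b = "mat_solve D R v"
  have "krig D R u v = (\<Sum>y\<in>D. (\<Sum>x\<in>D. R y x * ?a x) * ?b y)"
    unfolding krig_def by (intro sum.cong refl) (simp add: mat_solve_eq[OF fin inv])
  also have "\<dots> = (\<Sum>y\<in>D. \<Sum>x\<in>D. R y x * ?a x * ?b y)"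
    by (simp add: sum_distrib_right)
  also have "\<dots> = (\<Sum>x\<in>D. \<Sum>y\<in>D. R y x * ?a x * ?b y)" by (rule sum.swap)
  also have "\<dots> = (\<Sum>x\<in>D. ?a x * (\<Sum>y\<in>D. R x y * ?b y))"
    by (simp add: sum_distrib_left sym mult_ac)
  also have "\<dots> = (\<Sum>x\<in>D. ?a x * v x)"
    by (intro sum.cong refl) (simp add: mat_solve_eq[OF fin inv])
  finally show ?thesis .
qed

section \<open>Linear statistics of independent Gaussian processes\<close>

lemma gaussian_process_indep_lincomb:
  fixes M :: "'a measure" and P :: "'i \<Rightarrow> 'a \<Rightarrow> 'q \<Rightarrow> real"
    and a mu :: "'i \<Rightarrow> 'q \<Rightarrow> real" and K :: "'i \<Rightarrow> 'q \<Rightarrow> 'q \<Rightarrow> real"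
  assumes PS: "prob_space M" and finS: "finite S" and finF: "finite F"
    and ind: "prob_space.indep_vars M (\<lambda>_. borel_pi UNIV) P S"
    and gp: "\<And>u. u \<in> S \<Longrightarrow> gaussian_process M (P u) (mu u) (K u)"
    and psd: "\<And>u c. u \<in> S \<Longrightarrow> 0 \<le> (\<Sum>y\<in>F. \<Sum>y'\<in>F. c y * c y' * K u y y')"
  shows "distr M borel (\<lambda>\<omega>. a0 + (\<Sum>u\<in>S. \<Sum>y\<in>F. a u y * P u \<omega> y))
    = gauss (a0 + (\<Sum>u\<in>S. \<Sum>y\<in>F. a u y * mu u y)) (\<Sum>u\<in>S. \<Sum>y\<in>F. \<Sum>y'\<in>F. a u y * a u y' * K u y y')"
proof (rule indep_gauss_sum[OF PS finS])
  have "(\<lambda>f. \<Sum>y\<in>F. a u y * f y) \<in> borel_measurable (borel_pi UNIV)" for u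
    by measurable
  then show "prob_space.indep_vars M (\<lambda>_. borel) (\<lambda>u \<omega>. \<Sum>y\<in>F. a u y * P u \<omega> y) S"
    using prob_space.indep_vars_compose2[OF PS ind, of "\<lambda>u f. \<Sum>y\<in>F. a u y * f y" "\<lambda>_. borel"]
    by simp
  fix u assume u: "u \<in> S"
  show "distr M borel (\<lambda>\<omega>. \<Sum>y\<in>F. a u y * P u \<omega> y)
      = gauss (\<Sum>y\<in>F. a u y * mu u y) (\<Sum>y\<in>F. \<Sum>y'\<in>F. a u y * a u y' * K u y y')"
    using gp[OF u] finF unfolding gaussian_process_def by blast
  show "0 \<le> (\<Sum>y\<in>F. \<Sum>y'\<in>F. a u y * a u y' * K u y y')" by (rule psd[OF u])
qed

section \<open>The co-kriging model\<close>

text \<open>The factor rho_u(y) rho_{u+1}(y) ... rho_{t-1}(y) by which the innovation of level u enters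
  level t.\<close>
definition rho_prod :: "(nat \<Rightarrow> 'q \<Rightarrow> real) \<Rightarrow> nat \<Rightarrow> nat \<Rightarrow> 'q \<Rightarrow> real" where
  "rho_prod rho u t y = (\<Prod>k\<in>{u..<t}. rho k y)"

lemma rho_prod_same[simp]: "rho_prod rho t t y = 1"
  by (simp add: rho_prod_def)

lemma rho_prod_Suc: "u \<le> t \<Longrightarrow> rho_prod rho u (Suc t) y = rho t y * rho_prod rho u t y"
  by (simp add: rho_prod_def prod.atLeastLessThan_Suc mult.commute)

text \<open>The hypotheses of the main theorem, with the mean functions m and the scale functions rho
  taken abstractly and the variances only assumed nonnegative.\<close>
locale cokriging_model =
  fixes M :: "'a measure" and s :: nat
    and m rho :: "nat \<Rightarrow> 'q \<Rightarrow> real"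
    and sigma2 :: "nat \<Rightarrow> real" and r :: "nat \<Rightarrow> 'q \<Rightarrow> 'q \<Rightarrow> real"
    and D :: "nat \<Rightarrow> 'q set" and Z delta :: "nat \<Rightarrow> 'a \<Rightarrow> 'q \<Rightarrow> real"
  assumes PS: "prob_space M"
    and sig: "\<forall>t\<in>{1..s}. 0 \<le> sigma2 t"
    and ker: "\<forall>t\<in>{1..s}. correlation_kernel (r t)"
    and finD: "\<forall>t\<in>{1..s}. finite (D t)"
    and nest: "\<forall>t\<in>{1..<s}. D (Suc t) \<subseteq> D t"
    and inv: "\<forall>t\<in>{1..s}. invertible_on (D t) (r t)"
    and gp1: "gaussian_process M (Z 1) (m 1) (\<lambda>x y. sigma2 1 * r 1 x y)"
    and gpd: "\<forall>t\<in>{2..s}. gaussian_process M (delta t) (m t) (\<lambda>x y. sigma2 t * r t x y)"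
    and ind: "prob_space.indep_vars M (\<lambda>_. borel_pi UNIV) (\<lambda>t. if t = 1 then Z 1 else delta t) {1..s}"
    and rec: "\<forall>t\<in>{2..s}. \<forall>\<omega>\<in>space M. \<forall>x. Z t \<omega> x = rho (t - 1) x * Z (t - 1) \<omega> x + delta t \<omega> x"
begin

definition innov :: "nat \<Rightarrow> 'a \<Rightarrow> 'q \<Rightarrow> real" where
  "innov u = (if u = 1 then Z 1 else delta u)"

lemma innov_gp: "u \<in> {1..s} \<Longrightarrow> gaussian_process M (innov u) (m u) (\<lambda>x y. sigma2 u * r u x y)"
  using gp1 gpd by (cases "u = 1") (auto simp: innov_def)

lemma innov_measurable[measurable]: "u \<in> {1..s} \<Longrightarrow> (\<lambda>\<omega>. innov u \<omega> y) \<in> borel_measurable M"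
  using innov_gp unfolding gaussian_process_def by blast

lemma r_sym: "u \<in> {1..s} \<Longrightarrow> r u a b = r u b a"
  using ker unfolding correlation_kernel_def by blast

lemma r_diag: "u \<in> {1..s} \<Longrightarrow> r u a a = 1"
  using ker unfolding correlation_kernel_def by blast

lemma designs_nested:
  assumes "1 \<le> u" "u \<le> v" "v \<le> s" shows "D v \<subseteq> D u"
  using assms(2,3)
proof (induction v rule: dec_induct)
  case base then show ?case by simp
next
  case (step n)
  then have "D (Suc n) \<subseteq> D n" using nest assms(1) by auto
  then show ?case using step by auto
qed

lemma Z_innov_sum:
  assumes "1 \<le> t" "t \<le> s" "\<omega> \<in> space M"
  shows "Z t \<omega> y = (\<Sum>u\<in>{1..t}. rho_prod rho u t y * innov u \<omega> y)"
  using assms(1,2)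
proof (induction t rule: dec_induct)
  case base then show ?case by (simp add: innov_def)
next
  case (step n)
  have "Z (Suc n) \<omega> y = rho n y * Z n \<omega> y + delta (Suc n) \<omega> y"
    using rec step assms(3) by force
  also have "delta (Suc n) \<omega> y = innov (Suc n) \<omega> y" using step by (simp add: innov_def)
  also have "Z n \<omega> y = (\<Sum>u\<in>{1..n}. rho_prod rho u n y * innov u \<omega> y)" using step by simp
  also have "rho n y * (\<Sum>u\<in>{1..n}. rho_prod rho u n y * innov u \<omega> y)
      = (\<Sum>u\<in>{1..n}. rho_prod rho u (Suc n) y * innov u \<omega> y)"
    by (simp add: sum_distrib_left rho_prod_Suc mult.assoc)
  finally show ?case by (simp add: sum.cl_ivl_Suc)
qed

lemma Z_measurable[measurable]:
  assumes "1 \<le> t" "t \<le> s" shows "(\<lambda>\<omega>. Z t \<omega> y) \<in> borel_measurable M"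
proof -
  have "(\<lambda>\<omega>. \<Sum>u\<in>{1..t}. rho_prod rho u t y * innov u \<omega> y) \<in> borel_measurable M"
    using assms by (intro borel_measurable_sum borel_measurable_times) auto
  then show ?thesis by (rule measurable_cong[THEN iffD1, rotated]) (simp add: Z_innov_sum[OF assms])
qed

definition kweight :: "'q \<Rightarrow> nat \<Rightarrow> 'q \<Rightarrow> real" where
  "kweight x u = mat_solve (D u) (r u) (r u x)"

definition kresid :: "'q \<Rightarrow> nat \<Rightarrow> 'a \<Rightarrow> real" where
  "kresid x u \<omega> = innov u \<omega> x - m u x - (\<Sum>y\<in>D u. kweight x u y * (innov u \<omega> y - m u y))"

lemma krig_kweight: "u \<in> {1..s} \<Longrightarrow> krig (D u) (r u) (r u x) v = (\<Sum>y\<in>D u. kweight x u y * v y)"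
  unfolding kweight_def using finD inv by (intro krig_sym) (auto intro: r_sym)

lemma kweight_out: "u \<in> {1..s} \<Longrightarrow> y \<notin> D u \<Longrightarrow> kweight x u y = 0"
  unfolding kweight_def using finD inv by (intro mat_solve_out) auto

lemma kweight_eq: "u \<in> {1..s} \<Longrightarrow> y \<in> D u \<Longrightarrow> (\<Sum>y'\<in>D u. r u y y' * kweight x u y') = r u x y"
  unfolding kweight_def using finD inv by (subst mat_solve_eq) auto

text \<open>By
  nestedness, the observed values on D_t determine those of delta_t.\<close>
lemma pred_error_resid:
  assumes "1 \<le> t" "t \<le> T" "T \<le> s" "\<omega> \<in> space M"
  shows "Z t \<omega> x - cok_mean m rho r D t x (obs_data Z D T \<omega>)
       = (\<Sum>u\<in>{1..t}. rho_prod rho u t x * kresid x u \<omega>)"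
  using assms(1)
proof (induction t rule: dec_induct)
  case base
  have "krig (D 1) (r 1) (r 1 x) (\<lambda>y. obs_data Z D T \<omega> (1, y) - m 1 y)
      = (\<Sum>y\<in>D 1. kweight x 1 y * (innov 1 \<omega> y - m 1 y))"
    using assms by (subst krig_kweight) (auto simp: obs_data_def innov_def intro!: sum.cong)
  then show ?case by (simp add: kresid_def innov_def)
next
  case (step n)
  then obtain k where n: "n = Suc k" by (cases n) auto
  have nT: "Suc n \<le> T" "Suc n \<le> s" using step assms by auto
  let ?z = "obs_data Z D T \<omega>"
  have Z_Suc: "Z (Suc n) \<omega> y = rho n y * Z n \<omega> y + innov (Suc n) \<omega> y" for y
    using rec nT assms(4) step by (force simp: innov_def)
  have delta_obs: "krig (D (Suc n)) (r (Suc n)) (r (Suc n) x)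
        (\<lambda>y. ?z (Suc n, y) - rho n y * ?z (n, y) - m (Suc n) y)
      = (\<Sum>y\<in>D (Suc n). kweight x (Suc n) y * (innov (Suc n) \<omega> y - m (Suc n) y))"
  proof -
    have "y \<in> D n" if "y \<in> D (Suc n)" for y
      using designs_nested[of n "Suc n"] step nT that by auto
    then show ?thesis using nT step Z_Suc
      by (subst krig_kweight) (auto simp: obs_data_def intro!: sum.cong)
  qed
  have "Z (Suc n) \<omega> x - cok_mean m rho r D (Suc n) x ?z
      = rho n x * (Z n \<omega> x - cok_mean m rho r D n x ?z) + kresid x (Suc n) \<omega>"
    unfolding Z_Suc using delta_obs by (simp add: n kresid_def algebra_simps)
  also have "\<dots> = (\<Sum>u\<in>{1..Suc n}. rho_prod rho u (Suc n) x * kresid x u \<omega>)"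
    using step by (simp add: sum.cl_ivl_Suc sum_distrib_left rho_prod_Suc mult.assoc)
  finally show ?case .
qed

lemma cok_var_sum:
  assumes "1 \<le> t" "t \<le> s"
  shows "cok_var sigma2 rho r D t x
       = (\<Sum>u\<in>{1..t}. (rho_prod rho u t x)\<^sup>2 * (sigma2 u * (1 - krig (D u) (r u) (r u x) (r u x))))"
  using assms(1)
proof (induction t rule: dec_induct)
  case base then show ?case by simp
next
  case (step n)
  then obtain k where n: "n = Suc k" by (cases n) auto
  have "cok_var sigma2 rho r D (Suc n) x = (rho n x)\<^sup>2 * cok_var sigma2 rho r D n x
      + sigma2 (Suc n) * (1 - krig (D (Suc n)) (r (Suc n)) (r (Suc n) x) (r (Suc n) x))"
    by (simp add: n)
  also have "\<dots> = (\<Sum>u\<in>{1..Suc n}. (rho_prod rho u (Suc n) x)\<^sup>2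
                   * (sigma2 u * (1 - krig (D u) (r u) (r u x) (r u x))))"
    using step by (simp add: sum.cl_ivl_Suc sum_distrib_left rho_prod_Suc power_mult_distrib mult.assoc)
  finally show ?case .
qed

text \<open>Every random variable of interest is a combination
  sum_{u in {1..s}} sum_{y in pts x} a_u(y) P_u(y) of innovation values at the design points and at x,
  described by its coefficient array a; stat_mean and stat_cov give its mean and the covariance of
  two such statistics.\<close>
definition pts :: "'q \<Rightarrow> 'q set" where
  "pts x = insert x (\<Union>u\<in>{1..s}. D u)"

definition cov :: "nat \<Rightarrow> 'q \<Rightarrow> 'q \<Rightarrow> real" where
  "cov u y y' = sigma2 u * r u y y'"

definition stat :: "'q \<Rightarrow> (nat \<Rightarrow> 'q \<Rightarrow> real) \<Rightarrow> 'a \<Rightarrow> real" where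
  "stat x a \<omega> = (\<Sum>u\<in>{1..s}. \<Sum>y\<in>pts x. a u y * innov u \<omega> y)"

definition stat_mean :: "'q \<Rightarrow> (nat \<Rightarrow> 'q \<Rightarrow> real) \<Rightarrow> real" where
  "stat_mean x a = (\<Sum>u\<in>{1..s}. \<Sum>y\<in>pts x. a u y * m u y)"

definition stat_cov :: "'q \<Rightarrow> (nat \<Rightarrow> 'q \<Rightarrow> real) \<Rightarrow> (nat \<Rightarrow> 'q \<Rightarrow> real) \<Rightarrow> real" where
  "stat_cov x a b = (\<Sum>u\<in>{1..s}. \<Sum>y\<in>pts x. \<Sum>y'\<in>pts x. a u y * b u y' * cov u y y')"

text \<open>Coefficients of the observation Z_t(y), of the kriging residual of level u, and of the
  prediction error at level t.\<close>
definition obs_coef :: "nat \<Rightarrow> 'q \<Rightarrow> nat \<Rightarrow> 'q \<Rightarrow> real" where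
  "obs_coef t y = (\<lambda>u y'. if u \<in> {1..t} \<and> y' = y then rho_prod rho u t y else 0)"

definition resid_coef :: "'q \<Rightarrow> nat \<Rightarrow> 'q \<Rightarrow> real" where
  "resid_coef x u y = (if y = x then 1 else 0) - kweight x u y"

definition err_coef :: "'q \<Rightarrow> nat \<Rightarrow> nat \<Rightarrow> 'q \<Rightarrow> real" where
  "err_coef x t = (\<lambda>u y. if u \<in> {1..t} then rho_prod rho u t x * resid_coef x u y else 0)"

lemma finite_pts: "finite (pts x)"
  unfolding pts_def using finD by auto

lemma D_subset_pts: "u \<in> {1..s} \<Longrightarrow> D u \<subseteq> pts x"
  unfolding pts_def by auto

lemma x_in_pts: "x \<in> pts x"
  unfolding pts_def by auto

lemma cov_psd: "u \<in> {1..s} \<Longrightarrow> finite F \<Longrightarrow> 0 \<le> (\<Sum>y\<in>F. \<Sum>y'\<in>F. c y * c y' * cov u y y')"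
proof -
  assume u: "u \<in> {1..s}" and F: "finite F"
  have "(\<Sum>y\<in>F. \<Sum>y'\<in>F. c y * c y' * cov u y y') = sigma2 u * (\<Sum>y\<in>F. \<Sum>y'\<in>F. c y * c y' * r u y y')"
    by (simp add: cov_def sum_distrib_left mult_ac)
  also have "\<dots> \<ge> 0"
    using sig ker u F unfolding correlation_kernel_def by (blast intro: mult_nonneg_nonneg)
  finally show ?thesis .
qed

lemma stat_cov_psd: "0 \<le> stat_cov x a a"
  unfolding stat_cov_def using finite_pts by (intro sum_nonneg cov_psd)

lemma stat_cov_sym: "stat_cov x a b = stat_cov x b a"
  unfolding stat_cov_def
proof (rule sum.cong[OF refl])
  fix u assume u: "u \<in> {1..s}"
  have "(\<Sum>y\<in>pts x. \<Sum>y'\<in>pts x. a u y * b u y' * cov u y y')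
      = (\<Sum>y'\<in>pts x. \<Sum>y\<in>pts x. a u y * b u y' * cov u y y')"
    by (rule sum.swap)
  also have "\<dots> = (\<Sum>y'\<in>pts x. \<Sum>y\<in>pts x. b u y' * a u y * cov u y' y)"
    using r_sym[OF u] by (simp add: cov_def mult_ac)
  finally show "(\<Sum>y\<in>pts x. \<Sum>y'\<in>pts x. a u y * b u y' * cov u y y')
      = (\<Sum>y\<in>pts x. \<Sum>y'\<in>pts x. b u y * a u y' * cov u y y')" .
qed

lemma stat_cov_expand:
  "stat_cov x (\<lambda>u y. \<alpha> * a u y + b u y) (\<lambda>u y. \<alpha> * a u y + b u y)
     = \<alpha>\<^sup>2 * stat_cov x a a + 2 * \<alpha> * stat_cov x a b + stat_cov x b b"
proof -
  have "stat_cov x (\<lambda>u y. \<alpha> * a u y + b u y) (\<lambda>u y. \<alpha> * a u y + b u y)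
      = \<alpha>\<^sup>2 * stat_cov x a a + \<alpha> * stat_cov x a b + \<alpha> * stat_cov x b a + stat_cov x b b"
    unfolding stat_cov_def
    by (simp add: algebra_simps sum.distrib sum_distrib_left power2_eq_square)
  then show ?thesis using stat_cov_sym[of x b a] by simp
qed

lemma stat_cov_sum_right:
  "stat_cov x a (\<lambda>u y. \<Sum>j\<in>J. c j * g j u y) = (\<Sum>j\<in>J. c j * stat_cov x a (g j))"
  unfolding stat_cov_def by (simp add: sum_distrib_left sum_distrib_right mult_ac sum.swap[of _ J])

lemma stat_mean_lin: "stat_mean x (\<lambda>u y. \<alpha> * a u y + b u y) = \<alpha> * stat_mean x a + stat_mean x b"
  unfolding stat_mean_def by (simp add: algebra_simps sum.distrib sum_distrib_left)

lemma stat_mean_sum: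
  "stat_mean x (\<lambda>u y. \<Sum>j\<in>J. c j * g j u y) = (\<Sum>j\<in>J. c j * stat_mean x (g j))"
  unfolding stat_mean_def by (simp add: sum_distrib_left sum_distrib_right mult_ac sum.swap[of _ J])

lemma stat_lin: "stat x (\<lambda>u y. \<alpha> * a u y + b u y) \<omega> = \<alpha> * stat x a \<omega> + stat x b \<omega>"
  unfolding stat_def by (simp add: algebra_simps sum.distrib sum_distrib_left)

lemma stat_sum: "stat x (\<lambda>u y. \<Sum>j\<in>J. c j * g j u y) \<omega> = (\<Sum>j\<in>J. c j * stat x (g j) \<omega>)"
  unfolding stat_def by (simp add: sum_distrib_left sum_distrib_right mult_ac sum.swap[of _ J])

lemma law_stat: "distr M borel (\<lambda>\<omega>. a0 + stat x a \<omega>) = gauss (a0 + stat_mean x a) (stat_cov x a a)"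
  unfolding stat_def stat_mean_def stat_cov_def
proof (rule gaussian_process_indep_lincomb[OF PS _ finite_pts])
  have "(\<lambda>t. if t = 1 then Z 1 else delta t) = innov" by (simp add: innov_def fun_eq_iff)
  then show "prob_space.indep_vars M (\<lambda>_. borel_pi UNIV) innov {1..s}" using ind by simp
  fix u assume u: "u \<in> {1..s}"
  have "cov u = (\<lambda>x y. sigma2 u * r u x y)" by (simp add: cov_def fun_eq_iff)
  then show "gaussian_process M (innov u) (m u) (cov u)" using innov_gp[OF u] by simp
qed (simp_all add: cov_psd finite_pts)

lemma sum_pts_kweight:
  "u \<in> {1..s} \<Longrightarrow> (\<Sum>y\<in>pts x. kweight x u y * f y) = (\<Sum>y\<in>D u. kweight x u y * f y)"
  using finite_pts D_subset_pts kweight_out by (intro sum.mono_neutral_right) auto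

lemma sum_resid_coef:
  "u \<in> {1..s} \<Longrightarrow> (\<Sum>y\<in>pts x. resid_coef x u y * f y) = f x - (\<Sum>y\<in>D u. kweight x u y * f y)"
  unfolding resid_coef_def using finite_pts x_in_pts
  by (simp add: left_diff_distrib sum_subtractf sum_pts_kweight if_distrib[where f="\<lambda>a. a * _"]
      sum.delta cong: if_cong)

text \<open>The kriging residual is uncorrelated with the innovation at every design point ...\<close>
lemma resid_coef_orth:
  assumes u: "u \<in> {1..s}" and y: "y \<in> D u"
  shows "(\<Sum>y1\<in>pts x. resid_coef x u y1 * r u y1 y) = 0"
proof -
  have "(\<Sum>y1\<in>pts x. resid_coef x u y1 * r u y1 y) = r u x y - (\<Sum>y1\<in>D u. kweight x u y1 * r u y1 y)"
    by (rule sum_resid_coef[OF u])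
  also have "(\<Sum>y1\<in>D u. kweight x u y1 * r u y1 y) = (\<Sum>y1\<in>D u. r u y y1 * kweight x u y1)"
    by (intro sum.cong refl) (simp add: r_sym[OF u, of y] mult.commute)
  also have "\<dots> = r u x y" by (rule kweight_eq[OF u y])
  finally show ?thesis by simp
qed

text \<open>... and its variance (relative to sigma2 u) is the kriging variance 1 - r^T R^{-1} r.\<close>
lemma resid_coef_quad:
  assumes u: "u \<in> {1..s}"
  shows "(\<Sum>y1\<in>pts x. \<Sum>y2\<in>pts x. resid_coef x u y1 * resid_coef x u y2 * r u y1 y2)
       = 1 - krig (D u) (r u) (r u x) (r u x)"
proof -
  define g where "g y2 = (\<Sum>y1\<in>pts x. resid_coef x u y1 * r u y1 y2)" for y2
  have "(\<Sum>y1\<in>pts x. \<Sum>y2\<in>pts x. resid_coef x u y1 * resid_coef x u y2 * r u y1 y2)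
      = (\<Sum>y2\<in>pts x. \<Sum>y1\<in>pts x. resid_coef x u y1 * resid_coef x u y2 * r u y1 y2)"
    by (rule sum.swap)
  also have "\<dots> = (\<Sum>y2\<in>pts x. resid_coef x u y2 * g y2)"
    unfolding g_def by (simp add: sum_distrib_left mult_ac)
  also have "\<dots> = g x - (\<Sum>y2\<in>D u. kweight x u y2 * g y2)" by (rule sum_resid_coef[OF u])
  also have "(\<Sum>y2\<in>D u. kweight x u y2 * g y2) = 0"
    unfolding g_def using resid_coef_orth[OF u] by (intro sum.neutral) auto
  also have "g x = 1 - (\<Sum>y1\<in>D u. kweight x u y1 * r u y1 x)"
    unfolding g_def by (simp add: sum_resid_coef[OF u] r_diag[OF u])
  also have "(\<Sum>y1\<in>D u. kweight x u y1 * r u y1 x) = krig (D u) (r u) (r u x) (r u x)"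
    unfolding krig_def kweight_def by (intro sum.cong refl) (simp add: r_sym[OF u] mult.commute)
  finally show ?thesis by simp
qed

lemma stat_obs_coef:
  assumes "t \<le> s" "y \<in> pts x"
  shows "stat x (obs_coef t y) \<omega> = (\<Sum>u\<in>{1..t}. rho_prod rho u t y * innov u \<omega> y)"
proof -
  have "stat x (obs_coef t y) \<omega>
      = (\<Sum>u\<in>{1..s}. if u \<in> {1..t} then rho_prod rho u t y * innov u \<omega> y else 0)"
    unfolding stat_def obs_coef_def using assms finite_pts
    by (intro sum.cong refl) (auto simp: if_distrib[where f="\<lambda>a. a * _"] sum.delta cong: if_cong)
  also have "\<dots> = (\<Sum>u\<in>{1..t}. rho_prod rho u t y * innov u \<omega> y)"
    by (rule sum.mono_neutral_cong_right) (use assms in auto)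
  finally show ?thesis .
qed

lemma stat_err_coef:
  assumes "t \<le> s"
  shows "stat x (err_coef x t) \<omega> - stat_mean x (err_coef x t)
       = (\<Sum>u\<in>{1..t}. rho_prod rho u t x * kresid x u \<omega>)"
proof -
  have "stat x (err_coef x t) \<omega> - stat_mean x (err_coef x t)
      = (\<Sum>u\<in>{1..s}. \<Sum>y\<in>pts x. err_coef x t u y * (innov u \<omega> y - m u y))"
    unfolding stat_def stat_mean_def by (simp add: sum_subtractf right_diff_distrib)
  also have "\<dots> = (\<Sum>u\<in>{1..s}. if u \<in> {1..t} then rho_prod rho u t x * kresid x u \<omega> else 0)"
  proof (intro sum.cong refl)
    fix u assume u: "u \<in> {1..s}"
    have resid: "(\<Sum>y\<in>pts x. resid_coef x u y * (innov u \<omega> y - m u y)) = kresid x u \<omega>"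
      by (simp add: sum_resid_coef[OF u] kresid_def)
    show "(\<Sum>y\<in>pts x. err_coef x t u y * (innov u \<omega> y - m u y))
        = (if u \<in> {1..t} then rho_prod rho u t x * kresid x u \<omega> else 0)"
    proof (cases "u \<in> {1..t}")
      case True
      then show ?thesis
        unfolding if_P[OF True] using resid by (simp add: err_coef_def mult.assoc sum_distrib_left[symmetric])
    next
      case False
      then have "\<And>y. err_coef x t u y = 0" unfolding err_coef_def by auto
      then show ?thesis unfolding if_not_P[OF False] by simp
    qed
  qed
  also have "\<dots> = (\<Sum>u\<in>{1..t}. rho_prod rho u t x * kresid x u \<omega>)"
    by (rule sum.mono_neutral_cong_right) (use assms in auto)
  finally show ?thesis .
qed

lemma stat_cov_err_obs:
  assumes "1 \<le> t'" "t' \<le> t" "t \<le> s" "y \<in> D t'"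
  shows "stat_cov x (err_coef x t) (obs_coef t' y) = 0"
  unfolding stat_cov_def
proof (rule sum.neutral, rule ballI)
  fix u assume u: "u \<in> {1..s}"
  have y_pts: "y \<in> pts x" using D_subset_pts[of t' x] assms by auto
  show "(\<Sum>y1\<in>pts x. \<Sum>y2\<in>pts x. err_coef x t u y1 * obs_coef t' y u y2 * cov u y1 y2) = 0"
  proof (cases "u \<in> {1..t'}")
    case True
    have yD: "y \<in> D u" using designs_nested[of u t'] True assms by auto
    have "(\<Sum>y1\<in>pts x. \<Sum>y2\<in>pts x. err_coef x t u y1 * obs_coef t' y u y2 * cov u y1 y2)
        = (\<Sum>y1\<in>pts x. err_coef x t u y1 * rho_prod rho u t' y * cov u y1 y)"
      using True y_pts finite_pts
      by (intro sum.cong refl) (simp add: obs_coef_def if_distrib[where f="\<lambda>a. _ * a"]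
          if_distrib[where f="\<lambda>a. a * _"] sum.delta cong: if_cong)
    also have "\<dots> = rho_prod rho u t x * rho_prod rho u t' y * sigma2 u
        * (\<Sum>y1\<in>pts x. resid_coef x u y1 * r u y1 y)"
      using True assms by (simp add: err_coef_def cov_def sum_distrib_left mult_ac)
    also have "\<dots> = 0" by (simp add: resid_coef_orth[OF u yD])
    finally show ?thesis .
  next
    case False
    then have "\<And>y2. obs_coef t' y u y2 = 0" unfolding obs_coef_def by auto
    then show ?thesis by simp
  qed
qed

lemma stat_cov_err_err:
  assumes "1 \<le> t" "t \<le> s"
  shows "stat_cov x (err_coef x t) (err_coef x t) = cok_var sigma2 rho r D t x"
proof -
  have "stat_cov x (err_coef x t) (err_coef x t)
      = (\<Sum>u\<in>{1..s}. if u \<in> {1..t} then (rho_prod rho u t x)\<^sup>2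
                       * (sigma2 u * (1 - krig (D u) (r u) (r u x) (r u x))) else 0)"
    unfolding stat_cov_def
  proof (rule sum.cong[OF refl])
    fix u assume u: "u \<in> {1..s}"
    show "(\<Sum>y\<in>pts x. \<Sum>y'\<in>pts x. err_coef x t u y * err_coef x t u y' * cov u y y')
        = (if u \<in> {1..t} then (rho_prod rho u t x)\<^sup>2
             * (sigma2 u * (1 - krig (D u) (r u) (r u x) (r u x))) else 0)"
    proof (cases "u \<in> {1..t}")
      case True
      then have "(\<Sum>y\<in>pts x. \<Sum>y'\<in>pts x. err_coef x t u y * err_coef x t u y' * cov u y y')
          = (rho_prod rho u t x)\<^sup>2 * sigma2 u
             * (\<Sum>y1\<in>pts x. \<Sum>y2\<in>pts x. resid_coef x u y1 * resid_coef x u y2 * r u y1 y2)"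
        by (simp add: err_coef_def cov_def sum_distrib_left power2_eq_square mult_ac)
      then show ?thesis unfolding if_P[OF True] by (simp add: resid_coef_quad[OF u])
    next
      case False
      then have "\<And>y. err_coef x t u y = 0" unfolding err_coef_def by auto
      then show ?thesis unfolding if_not_P[OF False] by simp
    qed
  qed
  also have "\<dots> = (\<Sum>u\<in>{1..t}. (rho_prod rho u t x)\<^sup>2 * (sigma2 u * (1 - krig (D u) (r u) (r u x) (r u x))))"
    by (rule sum.mono_neutral_cong_right) (use assms in auto)
  also have "\<dots> = cok_var sigma2 rho r D t x" by (rule cok_var_sum[OF assms, symmetric])
  finally show ?thesis .
qed

lemma cok_mean_measurable:
  "t \<le> s \<Longrightarrow> (\<lambda>z. cok_mean m rho r D t x z) \<in> borel_measurable (borel_pi UNIV)"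
proof (induction t rule: less_induct)
  case (less t)
  consider "t = 0" | "t = Suc 0" | k where "t = Suc (Suc k)"
    by (metis not0_implies_Suc)
  then show ?case
  proof cases
    case 1 then show ?thesis by simp
  next
    case 2
    have eq: "cok_mean m rho r D t x z = m 1 x + (\<Sum>y\<in>D 1. kweight x 1 y * (z (1, y) - m 1 y))" for z
      using 2 less by (simp add: krig_kweight)
    show ?thesis unfolding eq by measurable
  next
    case 3
    have IH: "(\<lambda>z. cok_mean m rho r D (Suc k) x z) \<in> borel_measurable (borel_pi UNIV)"
      using less 3 by simp
    have eq: "cok_mean m rho r D t x z = rho (Suc k) x * cok_mean m rho r D (Suc k) x z + m (Suc (Suc k)) x
      + (\<Sum>y\<in>D (Suc (Suc k)). kweight x (Suc (Suc k)) y
          * (z (Suc (Suc k), y) - rho (Suc k) y * z (Suc k, y) - m (Suc (Suc k)) y))" for z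
      using 3 less by (simp add: krig_kweight)
    show ?thesis unfolding eq using IH by measurable
  qed
qed

lemma obs_data_measurable:
  assumes "t \<le> s" shows "obs_data Z D t \<in> measurable M (borel_pi UNIV)"
  unfolding obs_data_def
proof (rule measurable_PiM_single')
  fix j :: "nat \<times> 'q"
  obtain u y where j: "j = (u, y)" by (cases j)
  show "(\<lambda>\<omega>. case j of (u, y) \<Rightarrow> if u \<in> {1..t} \<and> y \<in> D u then Z u \<omega> y else 0) \<in> borel_measurable M"
    using assms by (cases "u \<in> {1..t} \<and> y \<in> D u") (auto simp: j)
qed simp

definition obs_comb :: "nat \<Rightarrow> (nat \<times> 'q \<Rightarrow> real) \<Rightarrow> nat \<Rightarrow> 'q \<Rightarrow> real" where
  "obs_comb t c = (\<lambda>u y. \<Sum>j\<in>Sigma {1..t} D. c j * obs_coef (fst j) (snd j) u y)"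

text \<open>Every combination c0 (prediction error) + c.(observations) is Gaussian with a variance
  free of cross terms: the error is uncorrelated with the observations.\<close>
lemma law_error_obs:
  assumes t: "1 \<le> t" "t \<le> s"
  shows "distr M borel (\<lambda>\<omega>. c0 * (Z t \<omega> x - cok_mean m rho r D t x (obs_data Z D t \<omega>))
                            + (\<Sum>j\<in>Sigma {1..t} D. c j * obs_data Z D t \<omega> j))
    = gauss (\<Sum>j\<in>Sigma {1..t} D. c j * stat_mean x (obs_coef (fst j) (snd j)))
        (c0\<^sup>2 * cok_var sigma2 rho r D t x + stat_cov x (obs_comb t c) (obs_comb t c))"
proof -
  let ?comb = "\<lambda>u y. c0 * err_coef x t u y + obs_comb t c u y"
  have err_stat: "Z t \<omega> x - cok_mean m rho r D t x (obs_data Z D t \<omega>)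
      = stat x (err_coef x t) \<omega> - stat_mean x (err_coef x t)" if "\<omega> \<in> space M" for \<omega>
    using pred_error_resid[OF t(1) order_refl t(2) that] stat_err_coef[OF t(2)] by simp
  have obs_stat: "obs_data Z D t \<omega> j = stat x (obs_coef (fst j) (snd j)) \<omega>"
    if \<omega>: "\<omega> \<in> space M" and j: "j \<in> Sigma {1..t} D" for \<omega> j
  proof -
    obtain u y where uy: "j = (u, y)" "u \<in> {1..t}" "y \<in> D u" using j by auto
    have "y \<in> pts x" using D_subset_pts[of u x] uy t by auto
    then show ?thesis
      using uy t Z_innov_sum[of u \<omega> y] \<omega> stat_obs_coef[of u y x \<omega>]
      unfolding obs_data_def by auto
  qed
  have rep: "c0 * (Z t \<omega> x - cok_mean m rho r D t x (obs_data Z D t \<omega>))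
        + (\<Sum>j\<in>Sigma {1..t} D. c j * obs_data Z D t \<omega> j)
      = - c0 * stat_mean x (err_coef x t) + stat x ?comb \<omega>" if \<omega>: "\<omega> \<in> space M" for \<omega>
  proof -
    have "(\<Sum>j\<in>Sigma {1..t} D. c j * obs_data Z D t \<omega> j)
        = (\<Sum>j\<in>Sigma {1..t} D. c j * stat x (obs_coef (fst j) (snd j)) \<omega>)"
      by (rule sum.cong) (simp_all add: obs_stat[OF \<omega>])
    then show ?thesis
      unfolding obs_comb_def stat_lin stat_sum err_stat[OF \<omega>] by (simp add: algebra_simps)
  qed
  have "distr M borel (\<lambda>\<omega>. c0 * (Z t \<omega> x - cok_mean m rho r D t x (obs_data Z D t \<omega>))
                            + (\<Sum>j\<in>Sigma {1..t} D. c j * obs_data Z D t \<omega> j))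
      = distr M borel (\<lambda>\<omega>. - c0 * stat_mean x (err_coef x t) + stat x ?comb \<omega>)"
    by (rule distr_cong[OF refl refl rep])
  also have "\<dots> = gauss (- c0 * stat_mean x (err_coef x t) + stat_mean x ?comb) (stat_cov x ?comb ?comb)"
    by (rule law_stat)
  also have "- c0 * stat_mean x (err_coef x t) + stat_mean x ?comb
      = (\<Sum>j\<in>Sigma {1..t} D. c j * stat_mean x (obs_coef (fst j) (snd j)))"
    unfolding obs_comb_def by (simp add: stat_mean_lin stat_mean_sum)
  also have "stat_cov x ?comb ?comb
      = c0\<^sup>2 * cok_var sigma2 rho r D t x + stat_cov x (obs_comb t c) (obs_comb t c)"
  proof -
    have "stat_cov x (err_coef x t) (obs_comb t c) = 0"
      unfolding obs_comb_def stat_cov_sum_right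
      by (intro sum.neutral ballI) (auto intro!: stat_cov_err_obs t)
    then show ?thesis unfolding stat_cov_expand using stat_cov_err_err[OF t] by simp
  qed
  finally show ?thesis .
qed

text \<open>The conditional law of Z_t(x) given the observations of levels 1..t: the prediction error is
  Gaussian noise independent of the observations, and Z_t(x) = error + co-kriging mean.\<close>
lemma cond_law:
  assumes t: "t \<in> {1..s}"
  shows "has_cond_distr M (\<lambda>\<omega>. Z t \<omega> x) (borel_pi UNIV) (obs_data Z D t)
           (\<lambda>z. gauss (cok_mean m rho r D t x z) (cok_var sigma2 rho r D t x))"
proof -
  have t1: "1 \<le> t" "t \<le> s" using t by auto
  have finJ: "finite (Sigma {1..t} D)" using finD t1 by (intro finite_SigmaI) auto
  have Ym[measurable]: "obs_data Z D t \<in> measurable M (borel_pi UNIV)"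
    by (rule obs_data_measurable[OF t1(2)])
  have Y0: "obs_data Z D t \<omega> j = 0" if "\<omega> \<in> space M" "j \<notin> Sigma {1..t} D" for \<omega> j
    using that unfolding obs_data_def by (auto split: prod.splits)
  have Lm[measurable]: "cok_mean m rho r D t x \<in> borel_measurable (borel_pi UNIV)"
    using cok_mean_measurable[OF t1(2)] by simp
  have em: "(\<lambda>\<omega>. Z t \<omega> x - cok_mean m rho r D t x (obs_data Z D t \<omega>)) \<in> borel_measurable M"
    using Z_measurable[OF t1] by measurable
  have v: "0 \<le> cok_var sigma2 rho r D t x"
    using stat_cov_err_err[OF t1, of x] stat_cov_psd[of x "err_coef x t"] by simp
  have "distr M (borel_pi UNIV \<Otimes>\<^sub>M borel)
          (\<lambda>\<omega>. (obs_data Z D t \<omega>, Z t \<omega> x - cok_mean m rho r D t x (obs_data Z D t \<omega>)))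
      = distr M (borel_pi UNIV) (obs_data Z D t) \<Otimes>\<^sub>M gauss 0 (cok_var sigma2 rho r D t x)"
    by (rule joint_law_uncorrelated_gauss[OF PS finJ Ym Y0 em v law_error_obs[OF t1] stat_cov_psd])
  then show ?thesis
    by (rule has_cond_distr_indep_noise[OF PS Ym em Lm _ v, rotated]) simp
qed

end

theorem mainTheorem1:
  fixes M :: "'a measure"
    and s :: nat
    and p q :: "nat \<Rightarrow> nat"
    and f :: "nat \<Rightarrow> 'q \<Rightarrow> nat \<Rightarrow> real" and beta :: "nat \<Rightarrow> nat \<Rightarrow> real"
    and g :: "nat \<Rightarrow> 'q \<Rightarrow> nat \<Rightarrow> real" and beta_rho :: "nat \<Rightarrow> nat \<Rightarrow> real"
    and sigma2 :: "nat \<Rightarrow> real"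
    and r :: "nat \<Rightarrow> 'q \<Rightarrow> 'q \<Rightarrow> real"
    and D :: "nat \<Rightarrow> 'q set"
    and Z delta :: "nat \<Rightarrow> 'a \<Rightarrow> 'q \<Rightarrow> real"
  defines "m \<equiv> (\<lambda>t x. \<Sum>i<p t. f t x i * beta t i)"
    and "rho \<equiv> (\<lambda>t x. \<Sum>i<q t. g t x i * beta_rho t i)"
  assumes "prob_space M"
    and "s \<ge> 2"
    and "\<forall>t\<in>{1..s}. sigma2 t > 0"
    and "\<forall>t\<in>{1..s}. correlation_kernel (r t)"
    and "\<forall>t\<in>{1..s}. finite (D t)"
    and "\<forall>t\<in>{1..<s}. D (Suc t) \<subseteq> D t"
    and "\<forall>t\<in>{1..s}. invertible_on (D t) (r t)"
    and "gaussian_process M (Z 1) (m 1) (\<lambda>x y. sigma2 1 * r 1 x y)"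
    and "\<forall>t\<in>{2..s}. gaussian_process M (delta t) (m t) (\<lambda>x y. sigma2 t * r t x y)"
    and "prob_space.indep_vars M (\<lambda>_. Pi\<^sub>M UNIV (\<lambda>_. borel))
           (\<lambda>t. if t = 1 then Z 1 else delta t) {1..s}"
    and "\<forall>t\<in>{2..s}. \<forall>\<omega>\<in>space M. \<forall>x.
           Z t \<omega> x = rho (t - 1) x * Z (t - 1) \<omega> x + delta t \<omega> x"
  shows "\<forall>t\<in>{1..s}. \<forall>x.
           has_cond_distr M (\<lambda>\<omega>. Z t \<omega> x) (Pi\<^sub>M UNIV (\<lambda>_. borel)) (obs_data Z D t)
             (\<lambda>z. gauss (cok_mean m rho r D t x z) (cok_var sigma2 rho r D t x))"
proof -
  have sig: "\<forall>t\<in>{1..s}. 0 \<le> sigma2 t"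
  proof
    fix t assume "t \<in> {1..s}"
    then have "0 < sigma2 t" using assms(5) by blast
    then show "0 \<le> sigma2 t" by simp
  qed
  interpret cokriging_model M s m rho sigma2 r D Z delta
    by (rule cokriging_model.intro[OF assms(3) sig assms(6-)])
  show ?thesis by (intro ballI allI cond_law)
qed

end
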